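(* In the resource theory of unital maps on a $d$-dimensional Hilbert space, with the currency $\mathcal C=\{C^k\}_{k=1}^d\cup\{\Omega\}$, $C^k=\{\Pi^k/k\}$, $\mathrm{Val}(C^k)=\log d-\log k$, $\mathrm{Val}(\Omega)=0$, the yield of any specification $V\in S^\Omega$ is $$\mathrm{Yield}(V)=\log d-\max_{\rho\in V^{\mathrm P}}H_0(\rho),$$ where $V^{\mathrm P}$ is the convex hull of $V$.
   Context: $\Omega$ is the set of all density operators on a Hilbert space $\mathcal H$ of dimension $d$ with fixed orthonormal basis $\{\ket i\}_{i=1}^d$; $S^\Omega$ is the set of non-empty subsets of $\Omega$; $\Pi^k=\sum_{i=1}^k\ket i\bra i$. Allowed transformations: $f_{\mathcal E}(V)=\{\mathcal E(\rho):\rho\in V\}$ for unital CPTP maps $\mathcal E$; $V\to W$ iff some unital CPTP $\mathcal E$ has $\mathcal E(\rho)\in W$ for all $\rho\in V$. $\mathrm{Yield}(V)=\sup\{\mathrm{Val}(C):C\in\mathcal C,\ V\to C\}$. $H_0(\rho)=\log\operatorname{rank}(\rho)$; logarithms are base 2. The convex hull $V^{\mathrm P}$ is the set of all finite convex combinations of elements of $V$. *)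

theory Defs
  imports "Jordan_Normal_Form.DL_Rank"
begin

(* Matrices are JNF complex matrices; the Hilbert space is C^d with the standard basis
   |i> = unit_vec d i (0-based indices 0..d-1). *)

definition mtrace :: "complex mat \<Rightarrow> complex" where
  "mtrace A = (\<Sum>i<dim_row A. A $$ (i, i))"

definition psd :: "nat \<Rightarrow> complex mat \<Rightarrow> bool" where
  "psd n A \<longleftrightarrow> A \<in> carrier_mat n n \<and>
     (\<forall>v \<in> carrier_vec n. Im (conjugate v \<bullet> (A *\<^sub>v v)) = 0 \<and> Re (conjugate v \<bullet> (A *\<^sub>v v)) \<ge> 0)"

definition density_ops :: "nat \<Rightarrow> complex mat set" where
  "density_ops d = {\<rho>. psd d \<rho> \<and> mtrace \<rho> = 1}"

definition linear_on :: "nat \<Rightarrow> (complex mat \<Rightarrow> complex mat) \<Rightarrow> bool" where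
  "linear_on d E \<longleftrightarrow>
     (\<forall>A \<in> carrier_mat d d. E A \<in> carrier_mat d d) \<and>
     (\<forall>A \<in> carrier_mat d d. \<forall>B \<in> carrier_mat d d. \<forall>a b :: complex.
        E (a \<cdot>\<^sub>m A + b \<cdot>\<^sub>m B) = a \<cdot>\<^sub>m E A + b \<cdot>\<^sub>m E B)"

(* (id_n \<otimes> E) applied to an (n*d) x (n*d) matrix, viewed as an n x n block matrix of
   d x d blocks; C^n \<otimes> C^d is indexed by (p, a) \<mapsto> p * d + a *)
definition id_tensor :: "nat \<Rightarrow> nat \<Rightarrow> (complex mat \<Rightarrow> complex mat) \<Rightarrow> complex mat \<Rightarrow> complex mat" where
  "id_tensor n d E M = mat (n * d) (n * d) (\<lambda>(i, j).
      E (mat d d (\<lambda>(a, b). M $$ ((i div d) * d + a, (j div d) * d + b))) $$ (i mod d, j mod d))"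

definition completely_positive :: "nat \<Rightarrow> (complex mat \<Rightarrow> complex mat) \<Rightarrow> bool" where
  "completely_positive d E \<longleftrightarrow>
     (\<forall>n. \<forall>M. psd (n * d) M \<longrightarrow> psd (n * d) (id_tensor n d E M))"

definition trace_preserving :: "nat \<Rightarrow> (complex mat \<Rightarrow> complex mat) \<Rightarrow> bool" where
  "trace_preserving d E \<longleftrightarrow> (\<forall>A \<in> carrier_mat d d. mtrace (E A) = mtrace A)"

definition unital_cptp :: "nat \<Rightarrow> (complex mat \<Rightarrow> complex mat) \<Rightarrow> bool" where
  "unital_cptp d E \<longleftrightarrow> linear_on d E \<and> completely_positive d E \<and> trace_preserving d E
     \<and> E (1\<^sub>m d) = 1\<^sub>m d"

definition specs :: "nat \<Rightarrow> complex mat set set" where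
  "specs d = {V. V \<noteq> {} \<and> V \<subseteq> density_ops d}"

definition convertible :: "nat \<Rightarrow> complex mat set \<Rightarrow> complex mat set \<Rightarrow> bool" where
  "convertible d V W \<longleftrightarrow> (\<exists>E. unital_cptp d E \<and> (\<forall>\<rho> \<in> V. E \<rho> \<in> W))"

(* Pi^k = sum_{i=1}^k |i><i|  (0-based: diagonal entries i < k equal 1) *)
definition Pi_proj :: "nat \<Rightarrow> nat \<Rightarrow> complex mat" where
  "Pi_proj d k = mat d d (\<lambda>(i, j). if i = j \<and> i < k then 1 else 0)"

(* currency: index Some k stands for C^k = {Pi^k / k} (1 \<le> k \<le> d), None stands for Omega *)
definition currency_index :: "nat \<Rightarrow> nat option set" where
  "currency_index d = {None} \<union> Some ` {1..d}"

definition currency_set :: "nat \<Rightarrow> nat option \<Rightarrow> complex mat set" where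
  "currency_set d c = (case c of None \<Rightarrow> density_ops d
                          | Some k \<Rightarrow> {(1 / of_nat k) \<cdot>\<^sub>m Pi_proj d k})"

definition currency_val :: "nat \<Rightarrow> nat option \<Rightarrow> real" where
  "currency_val d c = (case c of None \<Rightarrow> 0 | Some k \<Rightarrow> log 2 (real d) - log 2 (real k))"

definition yield :: "nat \<Rightarrow> complex mat set \<Rightarrow> real" where
  "yield d V = Sup {currency_val d c | c. c \<in> currency_index d \<and> convertible d V (currency_set d c)}"

definition H0 :: "nat \<Rightarrow> complex mat \<Rightarrow> real" where
  "H0 d \<rho> = log 2 (real (vec_space.rank d \<rho>))"

definition conv_hull_mat :: "nat \<Rightarrow> complex mat set \<Rightarrow> complex mat set" where
  "conv_hull_mat d V = {mat d d (\<lambda>(i, j). \<Sum>l<m. of_real (p l :: real) * (r l) $$ (i, j)) | m p r.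
      (m :: nat) > 0 \<and> (\<forall>l<m. p l \<ge> 0 \<and> r l \<in> V) \<and> (\<Sum>l<m. p l) = 1}"

end

theory Submission
  imports Defs "Jordan_Normal_Form.Gram_Schmidt"
begin

text \<open>Let \<open>R\<close> be the largest rank of a state in the convex hull \<open>V\<^sup>P\<close>, attained at \<open>\<rho>\<^sub>0\<close>, and let
  \<open>P\<close> be the projection onto the range of \<open>\<rho>\<^sub>0\<close>.
  Every \<open>\<rho> \<in> V\<close> satisfies \<open>P \<rho> = \<rho>\<close>: the range of \<open>(\<rho>\<^sub>0 + \<rho>)/2 \<in> V\<^sup>P\<close> contains the ranges of \<open>\<rho>\<^sub>0\<close>
  and \<open>\<rho>\<close>, and by maximality of \<open>R\<close> it equals that of \<open>\<rho>\<^sub>0\<close>. Hence the unital channel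
  \<open>X \<mapsto> tr(P X) \<Pi>\<^sup>R/R + tr((1 - P) X) (1 - \<Pi>\<^sup>R)/(d - R)\<close> sends every state of \<open>V\<close> to \<open>\<Pi>\<^sup>R/R\<close>.
  Conversely, a unital channel \<open>E\<close> sending \<open>V\<close> to \<open>\<Pi>\<^sup>k/k\<close> sends all of \<open>V\<^sup>P\<close>, in particular \<open>\<rho>\<^sub>0\<close>, there.
  As \<open>P \<le> S \<rho>\<^sub>0\<close> for some \<open>S\<close>, \<open>E(P)\<close> vanishes outside the first \<open>k\<close> diagonal entries, and
  \<open>E(P) \<le> E(1) = 1\<close>; so \<open>R = tr E(P) \<le> k\<close>.\<close>

section \<open>Sesquilinear forms and positive semidefinite matrices\<close>

text \<open>Vectors of \<open>\<complex>\<^sup>d\<close> are represented by functions \<open>nat \<Rightarrow> complex\<close>, of which only the values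
  below \<open>d\<close> matter; \<open>sesq d A f g\<close> is \<open>\<langle>f, A g\<rangle>\<close>.\<close>

definition sesq :: "nat \<Rightarrow> complex mat \<Rightarrow> (nat \<Rightarrow> complex) \<Rightarrow> (nat \<Rightarrow> complex) \<Rightarrow> complex" where
  "sesq d A f g = (\<Sum>i<d. \<Sum>j<d. cnj (f i) * A $$ (i,j) * g j)"

lemma mtrace_eq_sum: "A \<in> carrier_mat d d \<Longrightarrow> mtrace A = (\<Sum>i<d. A $$ (i,i))"
  unfolding mtrace_def by simp

lemma times_mat_index:
  assumes "A \<in> carrier_mat d d" "B \<in> carrier_mat d d" "a < d" "c < d"
  shows "(A * B) $$ (a,c) = (\<Sum>b<d. A $$ (a,b) * B $$ (b,c))"
  using assms by (simp add: scalar_prod_def lessThan_atLeast0)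

lemma sum_delta_left:
  fixes X :: "nat \<Rightarrow> complex"
  assumes "a < d"
  shows "(\<Sum>c<d. (if a = c then 1 else 0) * X c) = X a"
proof -
  have "(\<Sum>c<d. (if a = c then 1 else 0) * X c) = (\<Sum>c<d. if a = c then X c else 0)"
    by (rule sum.cong) auto
  then show ?thesis using assms by (simp add: sum.delta)
qed

lemma sum_delta_right:
  fixes X :: "nat \<Rightarrow> complex"
  assumes "b < d"
  shows "(\<Sum>c<d. X c * (if c = b then 1 else 0)) = X b"
proof -
  have "(\<Sum>c<d. X c * (if c = b then 1 else 0)) = (\<Sum>c<d. if b = c then X c else 0)"
    by (rule sum.cong) auto
  then show ?thesis using assms by (simp add: sum.delta)
qed

lemma cscalar_prod_eq_sesq:
  assumes A: "A \<in> carrier_mat d d" and v: "v \<in> carrier_vec d"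
  shows "conjugate v \<bullet> (A *\<^sub>v v) = sesq d A (($) v) (($) v)"
  using A v
  by (auto simp: sesq_def scalar_prod_def mult_mat_vec_def row_def lessThan_atLeast0
      sum_distrib_left mult.assoc intro!: sum.cong)

lemma sesq_cong:
  assumes "\<And>i. i < d \<Longrightarrow> f i = f' i" "\<And>i. i < d \<Longrightarrow> g i = g' i"
  shows "sesq d A f g = sesq d A f' g'"
  using assms unfolding sesq_def by (auto intro!: sum.cong)

lemma psd_iff_sesq:
  "psd d A \<longleftrightarrow> A \<in> carrier_mat d d \<and> (\<forall>f. Im (sesq d A f f) = 0 \<and> Re (sesq d A f f) \<ge> 0)"
proof
  assume p: "psd d A"
  then have A: "A \<in> carrier_mat d d" unfolding psd_def by simp
  show "A \<in> carrier_mat d d \<and> (\<forall>f. Im (sesq d A f f) = 0 \<and> Re (sesq d A f f) \<ge> 0)"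
  proof (intro conjI allI A)
    fix f :: "nat \<Rightarrow> complex"
    have v: "vec d f \<in> carrier_vec d" by simp
    have "sesq d A f f = sesq d A (($) (vec d f)) (($) (vec d f))" by (rule sesq_cong) auto
    also have "\<dots> = conjugate (vec d f) \<bullet> (A *\<^sub>v vec d f)" using cscalar_prod_eq_sesq[OF A v] by simp
    finally have e: "sesq d A f f = conjugate (vec d f) \<bullet> (A *\<^sub>v vec d f)" .
    show "Im (sesq d A f f) = 0" "Re (sesq d A f f) \<ge> 0" using p v unfolding e psd_def by auto
  qed
next
  assume "A \<in> carrier_mat d d \<and> (\<forall>f. Im (sesq d A f f) = 0 \<and> Re (sesq d A f f) \<ge> 0)"
  then show "psd d A" unfolding psd_def using cscalar_prod_eq_sesq by auto
qed

lemma sesq_add_mult: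
  "sesq d A (\<lambda>i. f i + t * g i) (\<lambda>i. f i + t * g i) =
     sesq d A f f + t * sesq d A f g + cnj t * sesq d A g f + cnj t * t * sesq d A g g"
  unfolding sesq_def by (simp add: algebra_simps sum.distrib sum_distrib_left)

lemma sesq_unit_left:
  assumes "a < d"
  shows "sesq d A (\<lambda>i. if i = a then 1 else 0) g = (\<Sum>j<d. A $$ (a,j) * g j)"
proof -
  have "sesq d A (\<lambda>i. if i = a then 1 else 0) g = (\<Sum>i<d. if i = a then (\<Sum>j<d. A $$ (a,j) * g j) else 0)"
    unfolding sesq_def by (intro sum.cong) auto
  also have "\<dots> = (\<Sum>j<d. A $$ (a,j) * g j)" using assms by (simp add: sum.delta)
  finally show ?thesis .
qed

lemma sesq_units:
  assumes "a < d" "b < d"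
  shows "sesq d A (\<lambda>i. if i = a then 1 else 0) (\<lambda>j. if j = b then 1 else 0) = A $$ (a,b)"
proof -
  have "sesq d A (\<lambda>i. if i = a then 1 else 0) (\<lambda>j. if j = b then 1 else 0) = (\<Sum>j<d. if j = b then A $$ (a,b) else 0)"
    unfolding sesq_unit_left[OF assms(1)] by (intro sum.cong) auto
  then show ?thesis using assms by (simp add: sum.delta)
qed

lemma sesq_lin:
  assumes "A \<in> carrier_mat d d" "B \<in> carrier_mat d d"
  shows "sesq d (a \<cdot>\<^sub>m A + b \<cdot>\<^sub>m B) f g = a * sesq d A f g + b * sesq d B f g"
  using assms unfolding sesq_def by (simp add: sum_distrib_left sum.distrib algebra_simps)

lemma sesq_one: "sesq d (1\<^sub>m d) g g = (\<Sum>a<d. cnj (g a) * g a)"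
proof -
  have "sesq d (1\<^sub>m d) g g = (\<Sum>a<d. \<Sum>b<d. if a = b then cnj (g a) * g b else 0)"
    unfolding sesq_def by (intro sum.cong refl) simp
  also have "\<dots> = (\<Sum>a<d. cnj (g a) * g a)" by (simp add: sum.delta)
  finally show ?thesis .
qed

lemma sesq_col:
  assumes A: "A \<in> carrier_mat d d" and B: "B \<in> carrier_mat d d" and j: "j < d"
  shows "sesq d A (\<lambda>i. B $$ (i,j)) (\<lambda>i. B $$ (i,j)) = (\<Sum>a<d. cnj (B $$ (a,j)) * (A * B) $$ (a,j))"
  unfolding sesq_def using times_mat_index[OF A B _ j] by (simp add: sum_distrib_left mult.assoc)

text \<open>Polarization: positivity of the quadratic form forces the sesquilinear form to be Hermitian.\<close>

lemma psd_sesq_swap: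
  assumes p: "psd d A"
  shows "sesq d A g f = cnj (sesq d A f g)"
proof -
  have r: "Im (sesq d A h h) = 0" for h using p unfolding psd_iff_sesq by auto
  have e1: "Im (sesq d A f g + sesq d A g f) = 0"
    using r[of "\<lambda>i. f i + 1 * g i"] r[of f] r[of g] unfolding sesq_add_mult by simp
  have e2: "Re (sesq d A f g - sesq d A g f) = 0"
    using r[of "\<lambda>i. f i + \<i> * g i"] r[of f] r[of g] unfolding sesq_add_mult by simp
  show ?thesis using e1 e2 by (simp add: complex_eq_iff)
qed

lemma psd_entry_swap:
  assumes p: "psd d A" and "a < d" "b < d"
  shows "A $$ (b,a) = cnj (A $$ (a,b))"
  using psd_sesq_swap[OF p, of "\<lambda>j. if j = b then 1 else 0" "\<lambda>i. if i = a then 1 else 0"]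
    sesq_units[OF assms(2,3), of A] sesq_units[OF assms(3,2), of A] by simp

lemma psd_diag:
  assumes p: "psd d A" and a: "a < d"
  shows "Im (A $$ (a,a)) = 0" "Re (A $$ (a,a)) \<ge> 0"
  using p sesq_units[OF a a, of A] unfolding psd_iff_sesq by metis+

lemma psd_sesq_real:
  assumes p: "psd d A"
  shows "sesq d A f f = complex_of_real (Re (sesq d A f f))"
  using p unfolding psd_iff_sesq by (simp add: complex_eq_iff)

text \<open>The additive \<open>1\<close> spares a case split on \<open>\<langle>w, A w\<rangle> = 0\<close>.\<close>

lemma psd_cauchy_schwarz:
  assumes p: "psd d A"
  shows "(cmod (sesq d A w f))\<^sup>2 \<le> (Re (sesq d A w w) + 1) * Re (sesq d A f f)"
proof -
  define \<gamma> where "\<gamma> = sesq d A w f"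
  define \<alpha> where "\<alpha> = Re (sesq d A w w)"
  define \<beta> where "\<beta> = Re (sesq d A f f)"
  define s where "s = \<alpha> + 1"
  have a0: "\<alpha> \<ge> 0" "\<beta> \<ge> 0" using p unfolding psd_iff_sesq \<alpha>_def \<beta>_def by auto
  have s0: "s > 0" using a0 unfolding s_def by simp
  have ww: "sesq d A w w = complex_of_real \<alpha>" using psd_sesq_real[OF p] \<alpha>_def by simp
  have ff: "sesq d A f f = complex_of_real \<beta>" using psd_sesq_real[OF p] \<beta>_def by simp
  have fw: "sesq d A f w = cnj \<gamma>" using psd_sesq_swap[OF p, of w f] \<gamma>_def by simp
  define t where "t = - \<gamma> * complex_of_real (1 / s)"
  define g where "g = (Re \<gamma>)\<^sup>2 + (Im \<gamma>)\<^sup>2"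
  have "0 \<le> Re (sesq d A (\<lambda>i. f i + t * w i) (\<lambda>i. f i + t * w i))" using p unfolding psd_iff_sesq by auto
  also have "Re (sesq d A (\<lambda>i. f i + t * w i) (\<lambda>i. f i + t * w i)) = \<beta> - 2 * g / s + g * \<alpha> / s\<^sup>2"
    unfolding sesq_add_mult ww ff fw \<gamma>_def[symmetric] t_def g_def
    by (simp add: power2_eq_square field_simps)
  finally have ineq: "0 \<le> \<beta> - 2 * g / s + g * \<alpha> / s\<^sup>2" .
  have g0: "g \<ge> 0" unfolding g_def by simp
  have "0 \<le> (\<beta> - 2 * g / s + g * \<alpha> / s\<^sup>2) * s\<^sup>2" using ineq s0 by simp
  also have "\<dots> = \<beta> * s\<^sup>2 - 2 * g * s + g * \<alpha>" using s0 by (simp add: field_simps power2_eq_square)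
  finally have "g * s \<le> \<beta> * s * s"
    using g0 a0 unfolding s_def by (simp add: power2_eq_square algebra_simps)
  then have "g \<le> \<beta> * s" using s0 by (metis mult_le_cancel_right_pos mult.commute mult.left_commute)
  moreover have "(cmod \<gamma>)\<^sup>2 = g" unfolding g_def by (simp add: cmod_power2)
  ultimately show ?thesis unfolding \<gamma>_def s_def \<beta>_def \<alpha>_def by (simp add: mult.commute)
qed

lemma psd_sesq_zero_imp_mult_zero:
  assumes p: "psd d A" and z: "Re (sesq d A f f) = 0" and a: "a < d"
  shows "(\<Sum>j<d. A $$ (a,j) * f j) = 0"
proof -
  have "(cmod (sesq d A (\<lambda>i. if i = a then 1 else 0) f))\<^sup>2 \<le> 0"
    using psd_cauchy_schwarz[OF p, of "\<lambda>i. if i = a then 1 else 0" f] z by simp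
  then show ?thesis using sesq_unit_left[OF a] by simp
qed

lemma psd_nonneg_comb:
  assumes "psd d A" "psd d B" "a \<ge> 0" "b \<ge> 0"
  shows "psd d (complex_of_real a \<cdot>\<^sub>m A + complex_of_real b \<cdot>\<^sub>m B)"
proof -
  have "A \<in> carrier_mat d d" "B \<in> carrier_mat d d" using assms unfolding psd_def by auto
  then show ?thesis using assms sesq_lin unfolding psd_iff_sesq by auto
qed

lemma psd_comb_mult_zero:
  assumes A: "psd d A" and B: "psd d B" and ab: "a > 0" "b > 0" and X: "X \<in> carrier_mat d d"
    and z: "(complex_of_real a \<cdot>\<^sub>m A + complex_of_real b \<cdot>\<^sub>m B) * X = 0\<^sub>m d d"
  shows "A * X = 0\<^sub>m d d"
proof (rule eq_matI)
  have AC: "A \<in> carrier_mat d d" and BC: "B \<in> carrier_mat d d" using A B unfolding psd_def by auto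
  fix i j assume "i < dim_row (0\<^sub>m d d :: complex mat)" "j < dim_col (0\<^sub>m d d :: complex mat)"
  then have ij: "i < d" "j < d" by auto
  let ?x = "\<lambda>k. X $$ (k,j)"
  have "complex_of_real a \<cdot>\<^sub>m A + complex_of_real b \<cdot>\<^sub>m B \<in> carrier_mat d d" using AC BC by simp
  from sesq_col[OF this X ij(2)]
  have "sesq d (complex_of_real a \<cdot>\<^sub>m A + complex_of_real b \<cdot>\<^sub>m B) ?x ?x = 0"
    unfolding z using ij(2) by simp
  then have "Re (complex_of_real a * sesq d A ?x ?x + complex_of_real b * sesq d B ?x ?x) = 0"
    unfolding sesq_lin[OF AC BC] by simp
  then have "a * Re (sesq d A ?x ?x) + b * Re (sesq d B ?x ?x) = 0" by simp
  moreover have "Re (sesq d A ?x ?x) \<ge> 0" "Re (sesq d B ?x ?x) \<ge> 0"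
    using A B unfolding psd_iff_sesq by auto
  ultimately have "Re (sesq d A ?x ?x) = 0" using ab
    by (smt (verit) mult_nonneg_nonneg mult_pos_pos)
  then show "(A * X) $$ (i,j) = 0\<^sub>m d d $$ (i,j)"
    using psd_sesq_zero_imp_mult_zero[OF A _ ij(1)] times_mat_index[OF AC X ij] ij by simp
qed (use A psd_def X in auto)

definition gram_mat :: "nat \<Rightarrow> nat \<Rightarrow> (nat \<Rightarrow> nat \<Rightarrow> complex) \<Rightarrow> complex mat" where
  "gram_mat d m G = mat d d (\<lambda>(a,b). \<Sum>t<m. G a t * cnj (G b t))"

lemma gram_mat_carrier[simp]: "gram_mat d m G \<in> carrier_mat d d"
  unfolding gram_mat_def by simp

lemma gram_mat_index[simp]:
  "a < d \<Longrightarrow> b < d \<Longrightarrow> gram_mat d m G $$ (a,b) = (\<Sum>t<m. G a t * cnj (G b t))"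
  unfolding gram_mat_def by simp

lemma sesq_gram_mat:
  "sesq d (gram_mat d m G) f f = complex_of_real (\<Sum>t<m. (cmod (\<Sum>b<d. cnj (G b t) * f b))\<^sup>2)"
proof -
  define z where "z t = (\<Sum>b<d. cnj (G b t) * f b)" for t
  have cz: "cnj (z t) = (\<Sum>i<d. cnj (f i) * G i t)" for t unfolding z_def by (simp add: mult.commute)
  have "sesq d (gram_mat d m G) f f = (\<Sum>i<d. \<Sum>j<d. \<Sum>t<m. cnj (f i) * G i t * (cnj (G j t) * f j))"
    unfolding sesq_def gram_mat_def
    by (intro sum.cong refl) (simp add: sum_distrib_left sum_distrib_right mult.assoc)
  also have "\<dots> = (\<Sum>i<d. \<Sum>t<m. \<Sum>j<d. cnj (f i) * G i t * (cnj (G j t) * f j))"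
    by (rule sum.cong[OF refl]) (rule sum.swap)
  also have "\<dots> = (\<Sum>t<m. \<Sum>i<d. \<Sum>j<d. cnj (f i) * G i t * (cnj (G j t) * f j))"
    by (rule sum.swap)
  also have "\<dots> = (\<Sum>t<m. cnj (z t) * z t)"
    unfolding cz by (simp only: z_def sum_product)
  also have "\<dots> = (\<Sum>t<m. complex_of_real ((cmod (z t))\<^sup>2))"
    by (intro sum.cong refl) (metis complex_norm_square mult.commute)
  finally show ?thesis unfolding z_def by simp
qed

lemma psd_gram_mat: "psd d (gram_mat d m G)"
  unfolding psd_iff_sesq sesq_gram_mat by (auto intro: sum_nonneg)

section \<open>Hermitian matrices and orthogonal projections\<close>

definition hermitian_mat :: "nat \<Rightarrow> complex mat \<Rightarrow> bool" where
  "hermitian_mat d A \<longleftrightarrow> A \<in> carrier_mat d d \<and> (\<forall>a<d. \<forall>b<d. A $$ (b,a) = cnj (A $$ (a,b)))"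

lemma hermitian_matD: "hermitian_mat d A \<Longrightarrow> a < d \<Longrightarrow> b < d \<Longrightarrow> A $$ (b,a) = cnj (A $$ (a,b))"
  unfolding hermitian_mat_def by blast

lemma hermitian_mat_carrier: "hermitian_mat d A \<Longrightarrow> A \<in> carrier_mat d d"
  unfolding hermitian_mat_def by blast

lemma psd_hermitian_mat:
  assumes "psd d A"
  shows "hermitian_mat d A"
  using assms psd_entry_swap[OF assms] unfolding hermitian_mat_def psd_def by blast

lemma hermitian_mat_zero: "hermitian_mat d (0\<^sub>m d d)"
  unfolding hermitian_mat_def by simp

text \<open>\<open>(B A)\<^sup>* = A B\<close>, so \<open>B A = C\<^sup>* = C\<close>.\<close>

lemma hermitian_mat_mult_comm:
  assumes A: "hermitian_mat d A" and B: "hermitian_mat d B" and C: "hermitian_mat d C"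
    and AB: "A * B = C"
  shows "B * A = C"
proof (rule eq_matI)
  have Ac: "A \<in> carrier_mat d d" and Bc: "B \<in> carrier_mat d d" and Cc: "C \<in> carrier_mat d d"
    using A B C hermitian_mat_carrier by auto
  fix a c assume "a < dim_row C" "c < dim_col C"
  then have ac: "a < d" "c < d" using Cc by auto
  have "(B * A) $$ (a,c) = (\<Sum>b<d. B $$ (a,b) * A $$ (b,c))" using times_mat_index[OF Bc Ac ac] .
  also have "\<dots> = (\<Sum>b<d. cnj (A $$ (c,b) * B $$ (b,a)))"
    using hermitian_matD[OF A ac(2)] hermitian_matD[OF B _ ac(1)]
    by (intro sum.cong refl) (simp add: mult.commute)
  also have "\<dots> = cnj ((A * B) $$ (c,a))" using times_mat_index[OF Ac Bc ac(2) ac(1)] by simp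
  also have "\<dots> = C $$ (a,c)" using AB hermitian_matD[OF C ac(2) ac(1)] by simp
  finally show "(B * A) $$ (a,c) = C $$ (a,c)" .
qed (use hermitian_mat_carrier[OF A] hermitian_mat_carrier[OF B] hermitian_mat_carrier[OF C] in auto)

definition compl_mat :: "nat \<Rightarrow> complex mat \<Rightarrow> complex mat" where
  "compl_mat d P = 1 \<cdot>\<^sub>m 1\<^sub>m d + (-1) \<cdot>\<^sub>m P"

lemma compl_mat_carrier[simp]: "P \<in> carrier_mat d d \<Longrightarrow> compl_mat d P \<in> carrier_mat d d"
  unfolding compl_mat_def by simp

lemma compl_mat_dim[simp]:
  "P \<in> carrier_mat d d \<Longrightarrow> dim_row (compl_mat d P) = d"
  "P \<in> carrier_mat d d \<Longrightarrow> dim_col (compl_mat d P) = d"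
  unfolding compl_mat_def by simp_all

lemma compl_mat_index:
  "P \<in> carrier_mat d d \<Longrightarrow> a < d \<Longrightarrow> b < d \<Longrightarrow> compl_mat d P $$ (a,b) = (if a = b then 1 else 0) - P $$ (a,b)"
  unfolding compl_mat_def by auto

lemma hermitian_mat_compl_mat:
  assumes h: "hermitian_mat d P"
  shows "hermitian_mat d (compl_mat d P)"
  unfolding hermitian_mat_def
proof (intro conjI allI impI)
  fix a b assume ab: "a < d" "b < d"
  show "compl_mat d P $$ (b,a) = cnj (compl_mat d P $$ (a,b))"
    using hermitian_matD[OF h ab] hermitian_mat_carrier[OF h] ab by (simp add: compl_mat_index)
qed (simp add: hermitian_mat_carrier[OF h])

lemma compl_mat_mult_eq_zero_iff:
  assumes P: "P \<in> carrier_mat d d" and X: "X \<in> carrier_mat d d"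
  shows "compl_mat d P * X = 0\<^sub>m d d \<longleftrightarrow> P * X = X"
proof -
  have e: "(compl_mat d P * X) $$ (a,c) = X $$ (a,c) - (P * X) $$ (a,c)" if ac: "a < d" "c < d" for a c
  proof -
    have "(compl_mat d P * X) $$ (a,c) = (\<Sum>b<d. (if a = b then 1 else 0) * X $$ (b,c) - P $$ (a,b) * X $$ (b,c))"
      using times_mat_index[OF compl_mat_carrier[OF P] X ac] ac by (simp add: compl_mat_index[OF P] algebra_simps)
    also have "\<dots> = X $$ (a,c) - (P * X) $$ (a,c)"
      using times_mat_index[OF P X ac] ac by (simp add: sum_subtractf sum_delta_left)
    finally show ?thesis .
  qed
  show ?thesis
  proof
    assume z: "compl_mat d P * X = 0\<^sub>m d d"
    show "P * X = X"
    proof (rule eq_matI)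
      fix i j assume "i < dim_row X" "j < dim_col X"
      then have ij: "i < d" "j < d" using X by auto
      show "(P * X) $$ (i,j) = X $$ (i,j)" using e[OF ij] z ij by simp
    qed (use P X in auto)
  next
    assume z: "P * X = X"
    show "compl_mat d P * X = 0\<^sub>m d d"
    proof (rule eq_matI)
      fix i j assume "i < dim_row (0\<^sub>m d d :: complex mat)" "j < dim_col (0\<^sub>m d d :: complex mat)"
      then have ij: "i < d" "j < d" by auto
      show "(compl_mat d P * X) $$ (i,j) = 0\<^sub>m d d $$ (i,j)" using e[OF ij] z ij by simp
    qed (use P X in auto)
  qed
qed

definition orthonormal :: "nat \<Rightarrow> nat \<Rightarrow> (nat \<Rightarrow> nat \<Rightarrow> complex) \<Rightarrow> bool" where
  "orthonormal d R u \<longleftrightarrow> (\<forall>i<R. \<forall>i'<R. (\<Sum>a<d. cnj (u i a) * u i' a) = (if i = i' then 1 else 0))"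

text \<open>The projection \<open>\<Sum>\<^sub>i<\<^sub>R |u i\<rangle>\<langle>u i|\<close> onto the span of \<open>u 0, \<dots>, u (R - 1)\<close>.\<close>

definition span_proj :: "nat \<Rightarrow> nat \<Rightarrow> (nat \<Rightarrow> nat \<Rightarrow> complex) \<Rightarrow> complex mat" where
  "span_proj d R u = gram_mat d R (\<lambda>a i. u i a)"

lemma span_proj_carrier[simp]: "span_proj d R u \<in> carrier_mat d d"
  unfolding span_proj_def by simp

lemma span_proj_dim[simp]: "dim_row (span_proj d R u) = d" "dim_col (span_proj d R u) = d"
  unfolding span_proj_def gram_mat_def by simp_all

lemma span_proj_index:
  "a < d \<Longrightarrow> b < d \<Longrightarrow> span_proj d R u $$ (a,b) = (\<Sum>i<R. u i a * cnj (u i b))"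
  unfolding span_proj_def by simp

lemma psd_span_proj: "psd d (span_proj d R u)"
  unfolding span_proj_def by (rule psd_gram_mat)

lemma hermitian_span_proj: "hermitian_mat d (span_proj d R u)"
  by (rule psd_hermitian_mat[OF psd_span_proj])

lemma span_proj_idem:
  assumes o: "orthonormal d R u" and ab: "a < d" "b < d"
  shows "(\<Sum>c<d. span_proj d R u $$ (a,c) * span_proj d R u $$ (c,b)) = span_proj d R u $$ (a,b)"
proof -
  have "(\<Sum>c<d. span_proj d R u $$ (a,c) * span_proj d R u $$ (c,b))
      = (\<Sum>c<d. \<Sum>i<R. \<Sum>i'<R. u i a * cnj (u i' b) * (cnj (u i c) * u i' c))"
    using ab by (intro sum.cong refl) (simp add: span_proj_index sum_distrib_left sum_distrib_right algebra_simps)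
  also have "\<dots> = (\<Sum>i<R. \<Sum>i'<R. u i a * cnj (u i' b) * (\<Sum>c<d. cnj (u i c) * u i' c))"
    by (subst sum.swap, rule sum.cong[OF refl], subst sum.swap) (simp add: sum_distrib_left)
  also have "\<dots> = (\<Sum>i<R. \<Sum>i'<R. if i = i' then u i a * cnj (u i' b) else 0)"
    using o unfolding orthonormal_def by (intro sum.cong refl) auto
  also have "\<dots> = (\<Sum>i<R. u i a * cnj (u i b))" by (simp add: sum.delta)
  finally show ?thesis using ab by (simp add: span_proj_index)
qed

lemma span_proj_trace:
  assumes o: "orthonormal d R u"
  shows "(\<Sum>a<d. span_proj d R u $$ (a,a)) = of_nat R"
proof -
  have "(\<Sum>a<d. span_proj d R u $$ (a,a)) = (\<Sum>a<d. \<Sum>i<R. cnj (u i a) * u i a)"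
    by (intro sum.cong refl) (simp add: span_proj_index mult.commute)
  also have "\<dots> = (\<Sum>i<R. \<Sum>a<d. cnj (u i a) * u i a)" by (rule sum.swap)
  also have "\<dots> = (\<Sum>i<R. 1)" using o unfolding orthonormal_def by (intro sum.cong refl) auto
  finally show ?thesis by simp
qed

lemma span_proj_fix:
  assumes o: "orthonormal d R u" and a: "a < d" and v: "\<forall>b<d. v b = (\<Sum>i<R. c i * u i b)"
  shows "(\<Sum>b<d. span_proj d R u $$ (a,b) * v b) = v a"
proof -
  have "(\<Sum>b<d. span_proj d R u $$ (a,b) * v b)
      = (\<Sum>b<d. \<Sum>i<R. \<Sum>i'<R. u i a * c i' * (cnj (u i b) * u i' b))"
    using a v by (intro sum.cong refl) (simp add: span_proj_index sum_distrib_left sum_distrib_right algebra_simps)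
  also have "\<dots> = (\<Sum>i<R. \<Sum>i'<R. u i a * c i' * (\<Sum>b<d. cnj (u i b) * u i' b))"
    by (subst sum.swap, rule sum.cong[OF refl], subst sum.swap) (simp add: sum_distrib_left)
  also have "\<dots> = (\<Sum>i<R. \<Sum>i'<R. if i = i' then u i a * c i' else 0)"
    using o unfolding orthonormal_def by (intro sum.cong refl) auto
  also have "\<dots> = (\<Sum>i<R. c i * u i a)" by (simp add: sum.delta mult.commute)
  finally show ?thesis using v a by simp
qed

lemma span_proj_mult_fix:
  assumes o: "orthonormal d R u" and A: "A \<in> carrier_mat d d"
    and cols: "\<And>b. b < d \<Longrightarrow> \<exists>k. \<forall>x<d. A $$ (x,b) = (\<Sum>i<R. k i * u i x)"
  shows "span_proj d R u * A = A"
proof (rule eq_matI)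
  fix a b assume "a < dim_row A" "b < dim_col A"
  then have ab: "a < d" "b < d" using A by auto
  obtain k where "\<forall>x<d. A $$ (x,b) = (\<Sum>i<R. k i * u i x)" using cols[OF ab(2)] by blast
  then have "(\<Sum>x<d. span_proj d R u $$ (a,x) * A $$ (x,b)) = A $$ (a,b)"
    by (rule span_proj_fix[OF o ab(1)])
  then show "(span_proj d R u * A) $$ (a,b) = A $$ (a,b)"
    using times_mat_index[OF span_proj_carrier A ab] by simp
qed (use A in auto)

lemma hermitian_idem_eq_gram_mat:
  assumes h: "hermitian_mat d M"
    and i: "\<And>a b. a < d \<Longrightarrow> b < d \<Longrightarrow> (\<Sum>c<d. M $$ (a,c) * M $$ (c,b)) = M $$ (a,b)"
  shows "M = gram_mat d d (\<lambda>a t. M $$ (a,t))"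
proof (rule eq_matI)
  fix a b assume "a < dim_row (gram_mat d d (\<lambda>a t. M $$ (a,t)))" "b < dim_col (gram_mat d d (\<lambda>a t. M $$ (a,t)))"
  then have ab: "a < d" "b < d" unfolding gram_mat_def by auto
  have "(\<Sum>t<d. M $$ (a,t) * cnj (M $$ (b,t))) = (\<Sum>t<d. M $$ (a,t) * M $$ (t,b))"
    using ab hermitian_matD[OF h] by (intro sum.cong refl) (metis complex_cnj_cnj lessThan_iff)
  then show "M $$ (a,b) = gram_mat d d (\<lambda>a t. M $$ (a,t)) $$ (a,b)" using ab i by simp
qed (use hermitian_mat_carrier[OF h] in \<open>auto simp: gram_mat_def\<close>)

lemma compl_span_proj_eq_gram_mat:
  assumes o: "orthonormal d R u"
  shows "compl_mat d (span_proj d R u) = gram_mat d d (\<lambda>a t. compl_mat d (span_proj d R u) $$ (a,t))"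
proof (rule hermitian_idem_eq_gram_mat[OF hermitian_mat_compl_mat[OF hermitian_span_proj]])
  let ?P = "span_proj d R u" let ?Q = "compl_mat d ?P"
  fix a b assume ab: "a < d" "b < d"
  have e: "?Q $$ (a,c) * ?Q $$ (c,b) = ((if a = c then 1 else 0) * (if c = b then 1 else 0) - (if a = c then 1 else 0) * ?P $$ (c,b))
       - (?P $$ (a,c) * (if c = b then 1 else 0) - ?P $$ (a,c) * ?P $$ (c,b))" if c: "c < d" for c
    using ab c by (simp add: compl_mat_index algebra_simps)
  have "(\<Sum>c<d. ?Q $$ (a,c) * ?Q $$ (c,b)) =
     ((\<Sum>c<d. (if a = c then 1 else 0) * (if c = b then 1 else 0)) - (\<Sum>c<d. (if a = c then 1 else 0) * ?P $$ (c,b)))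
     - ((\<Sum>c<d. ?P $$ (a,c) * (if c = b then 1 else 0)) - (\<Sum>c<d. ?P $$ (a,c) * ?P $$ (c,b)))"
    by (subst sum.cong[OF refl e], simp) (simp only: sum_subtractf)
  also have "\<dots> = ((if a = b then 1 else 0) - ?P $$ (a,b)) - (?P $$ (a,b) - ?P $$ (a,b))"
    unfolding sum_delta_left[OF ab(1)] sum_delta_right[OF ab(2)] span_proj_idem[OF o ab] by simp
  finally show "(\<Sum>c<d. ?Q $$ (a,c) * ?Q $$ (c,b)) = ?Q $$ (a,b)" using ab by (simp add: compl_mat_index)
qed

lemma psd_compl_span_proj:
  assumes o: "orthonormal d R u"
  shows "psd d (compl_mat d (span_proj d R u))"
  using compl_span_proj_eq_gram_mat[OF o] psd_gram_mat[of d d] by metis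

lemma compl_span_proj_full:
  assumes o: "orthonormal d d u"
  shows "compl_mat d (span_proj d d u) = 0\<^sub>m d d"
proof -
  let ?Q = "compl_mat d (span_proj d d u)"
  have diag: "?Q $$ (a,a) = (\<Sum>t<d. complex_of_real ((cmod (?Q $$ (a,t)))\<^sup>2))" if a: "a < d" for a
  proof -
    have "?Q $$ (a,a) = (\<Sum>t<d. ?Q $$ (a,t) * cnj (?Q $$ (a,t)))"
      using a by (subst compl_span_proj_eq_gram_mat[OF o]) simp
    also have "\<dots> = (\<Sum>t<d. complex_of_real ((cmod (?Q $$ (a,t)))\<^sup>2))"
      by (intro sum.cong refl) (rule complex_norm_square[symmetric])
    finally show ?thesis .
  qed
  have "(\<Sum>a<d. ?Q $$ (a,a)) = (\<Sum>a<d. 1 - span_proj d d u $$ (a,a))"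
    by (intro sum.cong refl) (simp add: compl_mat_index)
  also have "\<dots> = 0" using span_proj_trace[OF o] by (simp add: sum_subtractf)
  finally have "(\<Sum>a<d. \<Sum>t<d. complex_of_real ((cmod (?Q $$ (a,t)))\<^sup>2)) = 0" using diag by simp
  then have "complex_of_real (\<Sum>a<d. \<Sum>t<d. (cmod (?Q $$ (a,t)))\<^sup>2) = 0" by simp
  then have z: "(\<Sum>a<d. \<Sum>t<d. (cmod (?Q $$ (a,t)))\<^sup>2) = 0" by (simp only: of_real_eq_0_iff)
  have "(\<Sum>t<d. (cmod (?Q $$ (a,t)))\<^sup>2) = 0" if "a < d" for a
    using z that by (subst (asm) sum_nonneg_eq_0_iff) (auto intro: sum_nonneg)
  then have "(cmod (?Q $$ (a,t)))\<^sup>2 = 0" if "a < d" "t < d" for a t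
    using that by (subst (asm) sum_nonneg_eq_0_iff) auto
  then show ?thesis by (intro eq_matI) auto
qed

section \<open>An orthonormal basis of the range of a matrix\<close>

lemma range_corthogonal_basis:
  fixes A :: "complex mat"
  assumes A: "A \<in> carrier_mat d d"
  shows "\<exists>us. length us = vec_space.rank d A \<and> set us \<subseteq> carrier_vec d \<and> corthogonal us
     \<and> set us \<subseteq> LinearCombinations.module.span class_ring (module_vec TYPE(complex) d) (set (cols A))
     \<and> set (cols A) \<subseteq> LinearCombinations.module.span class_ring (module_vec TYPE(complex) d) (set us)"
proof -
  interpret cof_vec_space d "TYPE(complex)" .
  have colsC: "set (cols A) \<subseteq> carrier_vec d" using A cols_dim by blast
  obtain S where S: "maximal S (\<lambda>T. T \<subseteq> set (cols A) \<and> lin_indpt T)"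
    using maximal_exists[of "(\<lambda>T. T \<subseteq> set (cols A) \<and> lin_indpt T)" "card (set (cols A))" "{}"]
    by (meson List.finite_set card_mono empty_iff empty_subsetI finite_lin_indpt2 rev_finite_subset)
  have rk: "rank A = card S" using rank_card_indpt[OF A S] .
  have SC: "S \<subseteq> set (cols A)" and Sli: "lin_indpt S" using S unfolding maximal_def by auto
  have finS: "finite S" using SC finite_subset by blast
  obtain ws where ws: "set ws = S" "distinct ws" using finite_distinct_list[OF finS] by blast
  have wsC: "set ws \<subseteq> carrier_vec d" using ws SC colsC by auto
  define us where "us = gram_schmidt d ws"
  note gs = gram_schmidt_result[OF wsC ws(2) _ us_def, unfolded ws(1), OF Sli]
  have "set (cols A) \<subseteq> span S"
  proof
    fix c assume c: "c \<in> set (cols A)"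
    show "c \<in> span S"
    proof (cases "c \<in> S")
      case True then show ?thesis using in_own_span SC colsC by blast
    next
      case False
      have "lin_dep (S \<union> {c})"
      proof (rule ccontr)
        assume "lin_indpt (S \<union> {c})"
        then have "S \<union> {c} = S" using S c SC unfolding maximal_def by blast
        then show False using False by blast
      qed
      then show ?thesis using lin_dep_iff_in_span[of S c] Sli SC colsC c False by auto
    qed
  qed
  moreover have "S \<subseteq> span (set (cols A))" using SC colsC in_own_span by blast
  then have "span S \<subseteq> span (set (cols A))" using span_subsetI colsC by blast
  moreover have "set us \<subseteq> span (set us)" using gs in_own_span by blast
  ultimately show ?thesis using gs rk ws
    by (intro exI[of _ us]) (auto simp: distinct_card)
qed

lemma in_span_coeffs:
  fixes vs :: "complex vec list"
  assumes vs: "set vs \<subseteq> carrier_vec d"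
    and v: "v \<in> LinearCombinations.module.span class_ring (module_vec TYPE(complex) d) (set vs)"
  shows "\<exists>c. \<forall>a<d. v $ a = (\<Sum>i<length vs. c i * vs ! i $ a)"
proof -
  interpret cof_vec_space d "TYPE(complex)" .
  have "v \<in> span_list vs" using v span_list_as_span[OF vs] by simp
  then obtain c where vc: "v = lincomb_list c vs" by (auto elim: in_span_listE)
  have "\<forall>w\<in>set vs. dim_vec w = d" using vs by auto
  then have "v = mat_of_cols d vs *\<^sub>v vec (length vs) c" using vc lincomb_list_as_mat_mult by simp
  then show ?thesis
    by (auto simp: mult_mat_vec_def scalar_prod_def row_def mat_of_cols_def lessThan_atLeast0
        mult.commute intro!: sum.cong exI[of _ c])
qed

lemma in_span_cols_coeffs:
  assumes A: "A \<in> carrier_mat d d"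
    and v: "v \<in> LinearCombinations.module.span class_ring (module_vec TYPE(complex) d) (set (cols A))"
  shows "\<exists>k. \<forall>a<d. v $ a = (\<Sum>b<d. A $$ (a,b) * k b)"
proof -
  have "set (cols A) \<subseteq> carrier_vec d" using A cols_dim by blast
  then obtain k where k: "\<forall>a<d. v $ a = (\<Sum>j<length (cols A). k j * cols A ! j $ a)"
    using in_span_coeffs v by blast
  have "(\<Sum>j<length (cols A). k j * cols A ! j $ a) = (\<Sum>b<d. A $$ (a,b) * k b)" if a: "a < d" for a
  proof -
    have "(\<Sum>j<length (cols A). k j * cols A ! j $ a) = (\<Sum>b<d. k b * A $$ (a,b))"
      using A a by (intro sum.cong) auto
    also have "\<dots> = (\<Sum>b<d. A $$ (a,b) * k b)" by (intro sum.cong refl) (rule mult.commute)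
    finally show ?thesis .
  qed
  then have "\<forall>a<d. v $ a = (\<Sum>b<d. A $$ (a,b) * k b)" using k by auto
  then show ?thesis by (rule exI[of _ k])
qed

lemma corthogonal_normalize:
  assumes us: "corthogonal us" "set us \<subseteq> carrier_vec d"
  shows "\<exists>c. (\<forall>i<length us. c i \<noteq> 0) \<and> orthonormal d (length us) (\<lambda>i a. c i * us ! i $ a)"
proof -
  define nr where "nr i = sqrt (Re (us ! i \<bullet>c us ! i))" for i
  have real: "Im (v \<bullet>c v) = 0 \<and> Re (v \<bullet>c v) \<ge> 0" for v :: "complex vec"
    using conjugate_square_ge_0_vec[of v] by (simp add: less_eq_complex_def)
  have nrsq: "us ! i \<bullet>c us ! i = complex_of_real (nr i) * complex_of_real (nr i)" for i
    using real[of "us ! i"] unfolding nr_def by (simp add: complex_eq_iff)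
  have nrpos: "nr i > 0" if "i < length us" for i
  proof -
    have "Re (us ! i \<bullet>c us ! i) \<noteq> 0"
      using corthogonalD[OF us(1) that that] real[of "us ! i"] by (auto simp: complex_eq_iff)
    then show ?thesis using real[of "us ! i"] unfolding nr_def by simp
  qed
  have dim: "dim_vec (us ! i) = d" if "i < length us" for i using us(2) that by (metis carrier_vecD nth_mem subsetD)
  define c where "c i = 1 / complex_of_real (nr i)" for i
  have orth: "(\<Sum>a<d. cnj (c i * us ! i $ a) * (c i' * us ! i' $ a)) = (if i = i' then 1 else 0)"
    if ii: "i < length us" "i' < length us" for i i'
  proof -
    have "(\<Sum>a<d. cnj (c i * us ! i $ a) * (c i' * us ! i' $ a)) = cnj (c i) * c i' * (us ! i' \<bullet>c us ! i)"
      using dim[OF ii(1)] dim[OF ii(2)]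
      by (simp add: scalar_prod_def lessThan_atLeast0 sum_distrib_left ac_simps)
    then show ?thesis using corthogonalD[OF us(1) ii(2,1)] nrsq[of i] nrpos[OF ii(1)] by (auto simp: c_def)
  qed
  have "c i \<noteq> 0" if "i < length us" for i using nrpos[OF that] unfolding c_def by simp
  then show ?thesis using orth unfolding orthonormal_def by blast
qed

text \<open>\<open>u 0, \<dots>, u (rank A - 1)\<close> is an orthonormal basis of the range of \<open>A\<close>: each \<open>u i = A (w i)\<close>
  lies in the range, and the projection onto their span fixes \<open>A\<close>.\<close>

definition range_basis ::
  "nat \<Rightarrow> complex mat \<Rightarrow> (nat \<Rightarrow> nat \<Rightarrow> complex) \<Rightarrow> (nat \<Rightarrow> nat \<Rightarrow> complex) \<Rightarrow> bool" where
  "range_basis d A u w \<longleftrightarrow> orthonormal d (vec_space.rank d A) u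
     \<and> (\<forall>i<vec_space.rank d A. \<forall>a<d. u i a = (\<Sum>b<d. A $$ (a,b) * w i b))
     \<and> span_proj d (vec_space.rank d A) u * A = A"

lemma range_basis_exists:
  assumes A: "A \<in> carrier_mat d d"
  shows "\<exists>u w. range_basis d A u w"
proof -
  let ?R = "vec_space.rank d A"
  obtain us where us: "length us = ?R" "set us \<subseteq> carrier_vec d" "corthogonal us"
     "set us \<subseteq> LinearCombinations.module.span class_ring (module_vec TYPE(complex) d) (set (cols A))"
     "set (cols A) \<subseteq> LinearCombinations.module.span class_ring (module_vec TYPE(complex) d) (set us)"
    using range_corthogonal_basis[OF A] by blast
  obtain c where c: "\<forall>i<?R. c i \<noteq> 0" and o: "orthonormal d ?R (\<lambda>i a. c i * us ! i $ a)"
    using corthogonal_normalize[OF us(3,2)] us(1) by auto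
  define u where "u = (\<lambda>i a. c i * us ! i $ a)"
  have ou: "orthonormal d ?R u" using o unfolding u_def .
  have "\<exists>w. i < ?R \<longrightarrow> (\<forall>a<d. u i a = (\<Sum>b<d. A $$ (a,b) * w b))" for i
  proof (cases "i < ?R")
    case i: True
    then have "us ! i \<in> set us" using us(1) by simp
    then obtain k where k: "\<forall>a<d. us ! i $ a = (\<Sum>b<d. A $$ (a,b) * k b)"
      using in_span_cols_coeffs[OF A] us(4) by blast
    have "u i a = (\<Sum>b<d. A $$ (a,b) * (c i * k b))" if a: "a < d" for a
    proof -
      have "u i a = c i * (\<Sum>b<d. A $$ (a,b) * k b)" using k a unfolding u_def by simp
      also have "\<dots> = (\<Sum>b<d. A $$ (a,b) * (c i * k b))"
        unfolding sum_distrib_left by (intro sum.cong refl) (simp only: ac_simps)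
      finally show ?thesis .
    qed
    then show ?thesis by (intro exI[of _ "\<lambda>b. c i * k b"]) simp
  qed simp
  then obtain w where w: "\<forall>i<?R. \<forall>a<d. u i a = (\<Sum>b<d. A $$ (a,b) * w i b)"
    using choice[of "\<lambda>i w. i < ?R \<longrightarrow> (\<forall>a<d. u i a = (\<Sum>b<d. A $$ (a,b) * w b))"] by blast
  have "\<exists>k. \<forall>x<d. A $$ (x,b) = (\<Sum>i<?R. k i * u i x)" if b: "b < d" for b
  proof -
    have "col A b \<in> set (cols A)" using A b by (simp add: cols_def)
    then obtain k where "\<forall>x<d. col A b $ x = (\<Sum>i<length us. k i * us ! i $ x)"
      using in_span_coeffs[OF us(2), of "col A b"] us(5) by blast
    then have "\<forall>x<d. A $$ (x,b) = (\<Sum>i<?R. (k i / c i) * u i x)"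
      using A b us(1) c unfolding u_def by (auto intro!: sum.cong)
    then show ?thesis by (rule exI[of _ "\<lambda>i. k i / c i"])
  qed
  then have "span_proj d ?R u * A = A" by (rule span_proj_mult_fix[OF ou A])
  then have "range_basis d A u w" using ou w unfolding range_basis_def by blast
  then show ?thesis by blast
qed

lemma mtrace_eq_1_imp_rank_pos:
  assumes A: "A \<in> carrier_mat d d" and t: "mtrace A = 1"
  shows "vec_space.rank d A \<ge> 1"
proof (rule ccontr)
  assume "\<not> vec_space.rank d A \<ge> 1"
  then have "vec_space.rank d A = 0" by simp
  moreover obtain u w where "range_basis d A u w" using range_basis_exists[OF A] by blast
  ultimately have "A = span_proj d 0 u * A" unfolding range_basis_def by simp
  also have "span_proj d 0 u = 0\<^sub>m d d" by (intro eq_matI) (simp_all add: span_proj_index)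
  also have "0\<^sub>m d d * A = 0\<^sub>m d d" using A by simp
  finally have "mtrace A = mtrace (0\<^sub>m d d :: complex mat)" by (rule arg_cong)
  also have "\<dots> = 0" unfolding mtrace_def by simp
  finally show False using t by simp
qed

section \<open>Unital channels\<close>

lemma id_tensor_one:
  assumes M: "M \<in> carrier_mat d d" and EM: "E M \<in> carrier_mat d d"
  shows "id_tensor 1 d E M = E M"
proof -
  have "mat d d (\<lambda>(a, b). M $$ (0 * d + a, 0 * d + b)) = M"
    using M by (intro eq_matI) auto
  then show ?thesis unfolding id_tensor_def using EM by (intro eq_matI) auto
qed

lemma unital_cptp_carrier:
  "unital_cptp d E \<Longrightarrow> M \<in> carrier_mat d d \<Longrightarrow> E M \<in> carrier_mat d d"
  unfolding unital_cptp_def linear_on_def by auto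

lemma unital_cptp_lin:
  "unital_cptp d E \<Longrightarrow> A \<in> carrier_mat d d \<Longrightarrow> B \<in> carrier_mat d d \<Longrightarrow>
    E (a \<cdot>\<^sub>m A + b \<cdot>\<^sub>m B) = a \<cdot>\<^sub>m E A + b \<cdot>\<^sub>m E B"
  unfolding unital_cptp_def linear_on_def by auto

lemma unital_cptp_psd:
  assumes E: "unital_cptp d E" and p: "psd d M"
  shows "psd d (E M)"
proof -
  have M: "M \<in> carrier_mat d d" using p unfolding psd_def by simp
  have "\<forall>n M. psd (n * d) M \<longrightarrow> psd (n * d) (id_tensor n d E M)"
    using E unfolding unital_cptp_def completely_positive_def by blast
  then have "psd (1 * d) (id_tensor 1 d E M)" using p by (metis mult_1)
  then show ?thesis using id_tensor_one[of M d E, OF M unital_cptp_carrier[OF E M]] by simp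
qed

lemma unital_cptp_zero:
  assumes E: "unital_cptp d E"
  shows "E (0\<^sub>m d d) = 0\<^sub>m d d"
proof -
  have "E (0\<^sub>m d d) = E (0 \<cdot>\<^sub>m 0\<^sub>m d d + 0 \<cdot>\<^sub>m 0\<^sub>m d d)" by (simp add: smult_zero_mat)
  also have "\<dots> = 0 \<cdot>\<^sub>m E (0\<^sub>m d d) + 0 \<cdot>\<^sub>m E (0\<^sub>m d d)"
    using unital_cptp_lin[OF E zero_carrier_mat zero_carrier_mat] .
  also have "\<dots> = 0\<^sub>m d d" using unital_cptp_carrier[OF E zero_carrier_mat] by (intro eq_matI) auto
  finally show ?thesis .
qed

section \<open>A channel onto \<open>\<Pi>\<^sup>k/k\<close> bounds the rank\<close>

text \<open>By Cauchy--Schwarz, \<open>|\<langle>u i, f\<rangle>|\<^sup>2 = |\<langle>w i, \<sigma> f\<rangle>|\<^sup>2 \<le> (\<langle>w i, \<sigma> w i\<rangle> + 1) \<langle>f, \<sigma> f\<rangle>\<close>.\<close>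

lemma range_proj_le_scaled:
  assumes p: "psd d \<sigma>" and rb: "range_basis d \<sigma> u w"
  shows "\<exists>S. psd d (complex_of_real S \<cdot>\<^sub>m \<sigma> + (-1) \<cdot>\<^sub>m span_proj d (vec_space.rank d \<sigma>) u)"
proof -
  let ?R = "vec_space.rank d \<sigma>" let ?P = "span_proj d ?R u"
  have sC: "\<sigma> \<in> carrier_mat d d" using p unfolding psd_def by simp
  have uw: "\<forall>i<?R. \<forall>a<d. u i a = (\<Sum>b<d. \<sigma> $$ (a,b) * w i b)" using rb unfolding range_basis_def by blast
  define S where "S = (\<Sum>i<?R. Re (sesq d \<sigma> (w i) (w i)) + 1)"
  have u_sesq: "(\<Sum>b<d. cnj (u i b) * f b) = sesq d \<sigma> (w i) f" if i: "i < ?R" for i f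
  proof -
    have "cnj (u i b) = (\<Sum>c<d. cnj (w i c) * \<sigma> $$ (c,b))" if b: "b < d" for b
      using uw i b psd_entry_swap[OF p _ b] by (auto simp: mult.commute intro!: sum.cong)
    then have "(\<Sum>b<d. cnj (u i b) * f b) = (\<Sum>b<d. \<Sum>c<d. cnj (w i c) * \<sigma> $$ (c,b) * f b)"
      by (simp add: sum_distrib_right)
    also have "\<dots> = sesq d \<sigma> (w i) f" unfolding sesq_def by (rule sum.swap)
    finally show ?thesis .
  qed
  have bound: "Re (sesq d ?P f f) \<le> S * Re (sesq d \<sigma> f f)" for f
  proof -
    have "Re (sesq d ?P f f) = (\<Sum>i<?R. (cmod (sesq d \<sigma> (w i) f))\<^sup>2)"
      unfolding span_proj_def sesq_gram_mat using u_sesq by simp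
    also have "\<dots> \<le> (\<Sum>i<?R. (Re (sesq d \<sigma> (w i) (w i)) + 1) * Re (sesq d \<sigma> f f))"
      by (rule sum_mono) (rule psd_cauchy_schwarz[OF p])
    also have "\<dots> = S * Re (sesq d \<sigma> f f)" unfolding S_def by (rule sum_distrib_right[symmetric])
    finally show ?thesis .
  qed
  have "Im (sesq d \<sigma> f f) = 0" "Im (sesq d ?P f f) = 0" for f
    using p psd_span_proj unfolding psd_iff_sesq by auto
  then have "psd d (complex_of_real S \<cdot>\<^sub>m \<sigma> + (-1) \<cdot>\<^sub>m ?P)"
    using bound sC unfolding psd_iff_sesq sesq_lin[OF sC span_proj_carrier] by simp
  then show ?thesis ..
qed

lemma Pi_proj_dim[simp]: "dim_row (Pi_proj d k) = d" "dim_col (Pi_proj d k) = d"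
  unfolding Pi_proj_def by simp_all

lemma Pi_proj_diag: "j < d \<Longrightarrow> Pi_proj d k $$ (j,j) = (if j < k then 1 else 0)"
  unfolding Pi_proj_def by simp

lemma unital_cptp_span_proj_diag_le_one:
  assumes E: "unital_cptp d E" and o: "orthonormal d R u" and j: "j < d"
  shows "Re (E (span_proj d R u) $$ (j,j)) \<le> 1"
proof -
  let ?P = "span_proj d R u"
  have "E (compl_mat d ?P) = 1 \<cdot>\<^sub>m 1\<^sub>m d + (-1) \<cdot>\<^sub>m E ?P"
    using unital_cptp_lin[OF E one_carrier_mat span_proj_carrier] E
    unfolding compl_mat_def unital_cptp_def by simp
  then have "psd d (1 \<cdot>\<^sub>m 1\<^sub>m d + (-1) \<cdot>\<^sub>m E ?P)"
    using unital_cptp_psd[OF E psd_compl_span_proj[OF o]] by simp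
  from psd_diag(2)[OF this j] show ?thesis using j unital_cptp_carrier[OF E span_proj_carrier[of d R u]] by simp
qed

text \<open>With \<open>P\<close> the range projection of \<open>\<sigma>\<close>: \<open>0 \<le> E(P) \<le> S E(\<sigma>)\<close> kills the diagonal of \<open>E(P)\<close>
  from \<open>k\<close> on, and \<open>E(1 - P) \<ge> 0\<close> bounds it by \<open>1\<close> below \<open>k\<close>; so \<open>rank \<sigma> = tr P = tr E(P) \<le> k\<close>.\<close>

lemma rank_le_if_unital_cptp_to_Pi:
  assumes E: "unital_cptp d E" and p: "psd d \<sigma>" and k: "k \<le> d"
    and Es: "E \<sigma> = (1 / of_nat k) \<cdot>\<^sub>m Pi_proj d k"
  shows "vec_space.rank d \<sigma> \<le> k"
proof -
  let ?R = "vec_space.rank d \<sigma>"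
  have sC: "\<sigma> \<in> carrier_mat d d" using p unfolding psd_def by simp
  obtain u w where rb: "range_basis d \<sigma> u w" using range_basis_exists[OF sC] by blast
  then have o: "orthonormal d ?R u" unfolding range_basis_def by blast
  let ?P = "span_proj d ?R u"
  obtain S where S: "psd d (complex_of_real S \<cdot>\<^sub>m \<sigma> + (-1) \<cdot>\<^sub>m ?P)"
    using range_proj_le_scaled[OF p rb] by blast
  have EPp: "psd d (E ?P)" using unital_cptp_psd[OF E psd_span_proj] .
  have EPC: "E ?P \<in> carrier_mat d d" using unital_cptp_carrier[OF E span_proj_carrier] .
  have ES: "psd d (complex_of_real S \<cdot>\<^sub>m E \<sigma> + (-1) \<cdot>\<^sub>m E ?P)"
    using unital_cptp_psd[OF E S] unital_cptp_lin[OF E sC span_proj_carrier] by simp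
  have zero: "E ?P $$ (j,j) = 0" if j: "j < d" "k \<le> j" for j
  proof -
    have "E \<sigma> $$ (j,j) = 0" using j unfolding Es by (simp add: Pi_proj_diag)
    then have "Re (E ?P $$ (j,j)) \<le> 0"
      using psd_diag(2)[OF ES j(1)] j EPC unital_cptp_carrier[OF E sC] by simp
    then show ?thesis using psd_diag[OF EPp j(1)] by (simp add: complex_eq_iff)
  qed
  have "(\<Sum>j<d. E ?P $$ (j,j)) = mtrace ?P"
    using E mtrace_eq_sum[OF EPC] unfolding unital_cptp_def trace_preserving_def by simp
  also have "\<dots> = of_nat ?R" using span_proj_trace[OF o] mtrace_eq_sum[OF span_proj_carrier] by simp
  finally have tr: "(\<Sum>j<d. E ?P $$ (j,j)) = of_nat ?R" .
  have "(\<Sum>j<d. E ?P $$ (j,j)) = (\<Sum>j<k. E ?P $$ (j,j)) + (\<Sum>j\<in>{k..<d}. E ?P $$ (j,j))"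
    using k by (simp add: lessThan_atLeast0 sum.atLeastLessThan_concat)
  also have "(\<Sum>j\<in>{k..<d}. E ?P $$ (j,j)) = 0" using zero by (intro sum.neutral) auto
  finally have "real ?R = (\<Sum>j<k. Re (E ?P $$ (j,j)))" using tr
    by (metis Re_complex_of_real Re_sum add.right_neutral of_real_of_nat_eq)
  also have "\<dots> \<le> (\<Sum>j<k. 1)" using unital_cptp_span_proj_diag_le_one[OF E o] k by (intro sum_mono) auto
  finally show ?thesis by simp
qed

section \<open>Complete positivity of diagonal measure-and-prepare maps\<close>

lemma sum_lessThan_mult_split:
  fixes n d :: nat
  shows "(\<Sum>k<n*d. F k) = (\<Sum>p<n. \<Sum>a<d. F (p*d + a))"
proof (induction n)
  case 0 then show ?case by simp
next
  case (Suc n)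
  have "(\<Sum>k<Suc n * d. F k) = (\<Sum>k\<in>{0..<n*d}. F k) + (\<Sum>k\<in>{n*d..<d+n*d}. F k)"
    by (simp add: lessThan_atLeast0 sum.atLeastLessThan_concat)
  also have "(\<Sum>k\<in>{n*d..<d+n*d}. F k) = (\<Sum>a<d. F (n*d + a))"
    using sum.shift_bounds_nat_ivl[of F 0 "n*d" d] by (simp add: lessThan_atLeast0 add.commute)
  finally show ?case using Suc by (simp add: lessThan_atLeast0)
qed

lemma block_index_lt: "p < n \<Longrightarrow> a < (d::nat) \<Longrightarrow> p*d + a < n*d"
proof -
  assume "p < n" "a < d"
  then have "p*d + a < Suc p * d" by simp
  also have "\<dots> \<le> n * d" using \<open>p < n\<close> by (intro mult_le_mono1) simp
  finally show ?thesis .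
qed

lemma sum_delta_mid:
  fixes A X :: complex and C :: "nat \<Rightarrow> complex"
  assumes "a < d"
  shows "(\<Sum>b<d. A * (if a = b then X else 0) * C b) = A * X * C a"
proof -
  have "(\<Sum>b<d. A * (if a = b then X else 0) * C b) = (\<Sum>b<d. if a = b then A * X * C b else 0)"
    by (rule sum.cong) auto
  then show ?thesis using assms by (simp add: sum.delta)
qed

definition block_mat :: "nat \<Rightarrow> complex mat \<Rightarrow> nat \<Rightarrow> nat \<Rightarrow> complex mat" where
  "block_mat d M p q = mat d d (\<lambda>(i,j). M $$ (p*d+i, q*d+j))"

lemma sesq_block_vec:
  "sesq (n*d) M (\<lambda>k. f ((k div d)*d + a) * G (k mod d)) (\<lambda>k. f ((k div d)*d + a) * G (k mod d))
   = (\<Sum>p<n. \<Sum>q<n. cnj (f (p*d+a)) * f (q*d+a) * sesq d (block_mat d M p q) G G)"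
proof -
  have "sesq (n*d) M (\<lambda>k. f ((k div d)*d + a) * G (k mod d)) (\<lambda>k. f ((k div d)*d + a) * G (k mod d))
     = (\<Sum>p<n. \<Sum>i<d. \<Sum>q<n. \<Sum>j<d. cnj (f (p*d+a) * G i) * M $$ (p*d+i, q*d+j) * (f (q*d+a) * G j))"
    unfolding sesq_def sum_lessThan_mult_split by (intro sum.cong refl) simp
  also have "\<dots> = (\<Sum>p<n. \<Sum>q<n. \<Sum>i<d. \<Sum>j<d. cnj (f (p*d+a) * G i) * M $$ (p*d+i, q*d+j) * (f (q*d+a) * G j))"
    by (rule sum.cong[OF refl]) (rule sum.swap)
  also have "\<dots> = (\<Sum>p<n. \<Sum>q<n. cnj (f (p*d+a)) * f (q*d+a) * sesq d (block_mat d M p q) G G)"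
    unfolding sesq_def block_mat_def by (intro sum.cong refl) (simp add: sum_distrib_left algebra_simps)
  finally show ?thesis .
qed

text \<open>The map \<open>X \<mapsto> \<Sum>\<^sub>a c a (\<Sum>\<^sub>t \<langle>G a t, X G a t\<rangle>) |a\<rangle>\<langle>a|\<close>, with Kraus operators \<open>\<surd>(c a) |a\<rangle>\<langle>G a t|\<close>.\<close>

definition diag_kraus_map ::
  "nat \<Rightarrow> (nat \<Rightarrow> real) \<Rightarrow> nat \<Rightarrow> (nat \<Rightarrow> nat \<Rightarrow> nat \<Rightarrow> complex) \<Rightarrow> complex mat \<Rightarrow> complex mat" where
  "diag_kraus_map d c m G X = mat d d (\<lambda>(a,b). if a = b
     then complex_of_real (c a) * (\<Sum>t<m. sesq d X (G a t) (G a t)) else 0)"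

lemma diag_kraus_map_index:
  "a < d \<Longrightarrow> b < d \<Longrightarrow> diag_kraus_map d c m G X $$ (a,b) =
     (if a = b then complex_of_real (c a) * (\<Sum>t<m. sesq d X (G a t) (G a t)) else 0)"
  unfolding diag_kraus_map_def by simp

lemma diag_kraus_map_dim[simp]:
  "dim_row (diag_kraus_map d c m G X) = d" "dim_col (diag_kraus_map d c m G X) = d"
  unfolding diag_kraus_map_def by simp_all

lemma diag_kraus_map_carrier[simp]: "diag_kraus_map d c m G X \<in> carrier_mat d d"
  unfolding diag_kraus_map_def by simp

text \<open>On \<open>\<complex>\<^sup>n \<otimes> \<complex>\<^sup>d\<close> the quadratic form of \<open>(id \<otimes> \<Phi>) M\<close> at \<open>f\<close> is a nonnegative combination of
  quadratic forms of \<open>M\<close>, at the vectors \<open>f\<^sub>a \<otimes> G a t\<close> where \<open>f\<^sub>a\<close> is the \<open>a\<close>-th slice of \<open>f\<close>.\<close>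

lemma sesq_id_tensor_diag_kraus_map:
  "sesq (n*d) (id_tensor n d (diag_kraus_map d c m G) M) f f =
    (\<Sum>a<d. complex_of_real (c a) * (\<Sum>t<m. sesq (n*d) M
       (\<lambda>k. f ((k div d)*d + a) * G a t (k mod d)) (\<lambda>k. f ((k div d)*d + a) * G a t (k mod d))))"
proof -
  let ?B = "\<lambda>p q a. \<Sum>t<m. sesq d (block_mat d M p q) (G a t) (G a t)"
  have "sesq (n*d) (id_tensor n d (diag_kraus_map d c m G) M) f f = (\<Sum>p<n. \<Sum>a<d. \<Sum>q<n. \<Sum>b<d.
      cnj (f (p*d+a)) * (if a = b then complex_of_real (c a) * ?B p q a else 0) * f (q*d+b))"
    unfolding sesq_def sum_lessThan_mult_split
    by (intro sum.cong refl) (simp add: id_tensor_def diag_kraus_map_def block_index_lt block_mat_def sesq_def)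
  also have "\<dots> = (\<Sum>a<d. \<Sum>p<n. \<Sum>q<n. cnj (f (p*d+a)) * (complex_of_real (c a) * ?B p q a) * f (q*d+a))"
    by (subst sum.swap) (intro sum.cong refl sum_delta_mid, simp)
  also have "\<dots> = (\<Sum>a<d. complex_of_real (c a) *
      (\<Sum>t<m. \<Sum>p<n. \<Sum>q<n. cnj (f (p*d+a)) * f (q*d+a) * sesq d (block_mat d M p q) (G a t) (G a t)))"
  proof (rule sum.cong[OF refl])
    fix a
    have "(\<Sum>p<n. \<Sum>q<n. cnj (f (p*d+a)) * (complex_of_real (c a) * ?B p q a) * f (q*d+a))
        = complex_of_real (c a) * (\<Sum>p<n. \<Sum>q<n. \<Sum>t<m.
            cnj (f (p*d+a)) * f (q*d+a) * sesq d (block_mat d M p q) (G a t) (G a t))"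
      by (simp add: sum_distrib_left algebra_simps)
    also have "(\<Sum>p<n. \<Sum>q<n. \<Sum>t<m. cnj (f (p*d+a)) * f (q*d+a) * sesq d (block_mat d M p q) (G a t) (G a t))
        = (\<Sum>t<m. \<Sum>p<n. \<Sum>q<n. cnj (f (p*d+a)) * f (q*d+a) * sesq d (block_mat d M p q) (G a t) (G a t))"
      by (subst sum.swap, rule sum.cong[OF refl], rule sum.swap)
    finally show "(\<Sum>p<n. \<Sum>q<n. cnj (f (p*d+a)) * (complex_of_real (c a) * ?B p q a) * f (q*d+a))
        = complex_of_real (c a) * (\<Sum>t<m. \<Sum>p<n. \<Sum>q<n.
            cnj (f (p*d+a)) * f (q*d+a) * sesq d (block_mat d M p q) (G a t) (G a t))" .
  qed
  finally show ?thesis unfolding sesq_block_vec .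
qed

lemma completely_positive_diag_kraus_map:
  assumes c: "\<And>a. c a \<ge> 0"
  shows "completely_positive d (diag_kraus_map d c m G)"
  unfolding completely_positive_def
proof (intro allI impI)
  fix n M assume M: "psd (n * d) M"
  have r: "Im (sesq (n*d) M g g) = 0" "Re (sesq (n*d) M g g) \<ge> 0" for g
    using M unfolding psd_iff_sesq by auto
  show "psd (n * d) (id_tensor n d (diag_kraus_map d c m G) M)"
    unfolding psd_iff_sesq sesq_id_tensor_diag_kraus_map
    using r c by (auto simp: id_tensor_def Im_sum Re_sum intro!: sum_nonneg mult_nonneg_nonneg)
qed

lemma linear_on_diag_kraus_map: "linear_on d (diag_kraus_map d c m G)"
  unfolding linear_on_def
proof (intro conjI ballI allI)
  fix A B :: "complex mat" and a b :: complex assume A: "A \<in> carrier_mat d d" and B: "B \<in> carrier_mat d d"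
  show "diag_kraus_map d c m G (a \<cdot>\<^sub>m A + b \<cdot>\<^sub>m B) = a \<cdot>\<^sub>m diag_kraus_map d c m G A + b \<cdot>\<^sub>m diag_kraus_map d c m G B"
  proof (rule eq_matI)
    fix i j assume "i < dim_row (a \<cdot>\<^sub>m diag_kraus_map d c m G A + b \<cdot>\<^sub>m diag_kraus_map d c m G B)"
      "j < dim_col (a \<cdot>\<^sub>m diag_kraus_map d c m G A + b \<cdot>\<^sub>m diag_kraus_map d c m G B)"
    then have ij: "i < d" "j < d" by auto
    show "diag_kraus_map d c m G (a \<cdot>\<^sub>m A + b \<cdot>\<^sub>m B) $$ (i,j)
        = (a \<cdot>\<^sub>m diag_kraus_map d c m G A + b \<cdot>\<^sub>m diag_kraus_map d c m G B) $$ (i,j)"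
    proof -
      have "(\<Sum>t<m. sesq d (a \<cdot>\<^sub>m A + b \<cdot>\<^sub>m B) (G i t) (G i t))
          = a * (\<Sum>t<m. sesq d A (G i t) (G i t)) + b * (\<Sum>t<m. sesq d B (G i t) (G i t))" for i
        by (simp add: sesq_lin[OF A B] sum.distrib sum_distrib_left)
      then show ?thesis using ij by (simp add: diag_kraus_map_index algebra_simps)
    qed
  qed simp_all
qed simp

section \<open>The channel onto \<open>\<Pi>\<^sup>R/R\<close>\<close>

definition tr_prod :: "nat \<Rightarrow> complex mat \<Rightarrow> complex mat \<Rightarrow> complex" where
  "tr_prod d P X = (\<Sum>i<d. \<Sum>j<d. X $$ (i,j) * P $$ (j,i))"

lemma sum_sesq_eq_tr_prod_gram_mat:
  "(\<Sum>t<m. sesq d X (\<lambda>i. G i t) (\<lambda>i. G i t)) = tr_prod d (gram_mat d m G) X"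
proof -
  have "(\<Sum>t<m. sesq d X (\<lambda>i. G i t) (\<lambda>i. G i t)) = (\<Sum>t<m. \<Sum>i<d. \<Sum>j<d. X $$ (i,j) * (G j t * cnj (G i t)))"
    unfolding sesq_def by (intro sum.cong refl) (simp add: algebra_simps)
  also have "\<dots> = (\<Sum>i<d. \<Sum>j<d. \<Sum>t<m. X $$ (i,j) * (G j t * cnj (G i t)))"
    by (subst sum.swap, rule sum.cong[OF refl], rule sum.swap)
  also have "\<dots> = tr_prod d (gram_mat d m G) X"
    unfolding tr_prod_def by (intro sum.cong refl) (simp add: sum_distrib_left)
  finally show ?thesis .
qed

lemma tr_prod_add_compl:
  assumes X: "X \<in> carrier_mat d d" and P: "P \<in> carrier_mat d d"
  shows "tr_prod d P X + tr_prod d (compl_mat d P) X = mtrace X"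
proof -
  have "tr_prod d P X + tr_prod d (compl_mat d P) X = (\<Sum>i<d. \<Sum>j<d. X $$ (i,j) * (if j = i then 1 else 0))"
    unfolding tr_prod_def using P by (simp add: compl_mat_index algebra_simps sum.distrib[symmetric])
  also have "\<dots> = (\<Sum>i<d. X $$ (i,i))" by (intro sum.cong refl) (simp add: sum_delta_right)
  finally show ?thesis using mtrace_eq_sum[OF X] by simp
qed

lemma tr_prod_one: "tr_prod d A (1\<^sub>m d) = (\<Sum>i<d. A $$ (i,i))"
proof -
  have "tr_prod d A (1\<^sub>m d) = (\<Sum>i<d. \<Sum>j<d. (if i = j then 1 else 0) * A $$ (j,i))"
    unfolding tr_prod_def by (intro sum.cong refl) simp
  also have "\<dots> = (\<Sum>i<d. A $$ (i,i))" by (intro sum.cong refl) (simp add: sum_delta_left)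
  finally show ?thesis .
qed

text \<open>For \<open>a < R\<close> the vectors \<open>mp_vec d R u a t\<close> are \<open>u 0, \<dots>, u (R - 1)\<close> padded by zeros, for \<open>a \<ge> R\<close>
  the columns of \<open>1 - P\<close>; so the diagonal entry \<open>a\<close> of the image of \<open>X\<close> is \<open>tr(P X)/R\<close> resp.
  \<open>tr((1 - P) X)/(d - R)\<close>. If \<open>R = d\<close>, the junk weight \<open>1/0 = 0\<close> multiplies \<open>tr((1 - P) X) = 0\<close>.\<close>

definition mp_vec :: "nat \<Rightarrow> nat \<Rightarrow> (nat \<Rightarrow> nat \<Rightarrow> complex) \<Rightarrow> nat \<Rightarrow> nat \<Rightarrow> nat \<Rightarrow> complex" where
  "mp_vec d R u a t i = (if a < R then (if t < R then u t i else 0) else compl_mat d (span_proj d R u) $$ (i,t))"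

definition mp_weight :: "nat \<Rightarrow> nat \<Rightarrow> nat \<Rightarrow> real" where
  "mp_weight d R a = (if a < R then 1 / real R else 1 / real (d - R))"

definition measure_prepare :: "nat \<Rightarrow> nat \<Rightarrow> (nat \<Rightarrow> nat \<Rightarrow> complex) \<Rightarrow> complex mat \<Rightarrow> complex mat" where
  "measure_prepare d R u = diag_kraus_map d (mp_weight d R) d (mp_vec d R u)"

lemma measure_prepare_dim[simp]:
  "dim_row (measure_prepare d R u X) = d" "dim_col (measure_prepare d R u X) = d"
  unfolding measure_prepare_def by simp_all

lemma measure_prepare_index:
  assumes o: "orthonormal d R u" and R: "R \<le> d" and ab: "a < d" "b < d"
  shows "measure_prepare d R u X $$ (a,b) = (if a \<noteq> b then 0
     else if a < R then complex_of_real (1 / real R) * tr_prod d (span_proj d R u) X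
     else complex_of_real (1 / real (d - R)) * tr_prod d (compl_mat d (span_proj d R u)) X)"
proof -
  have low: "(\<Sum>t<d. sesq d X (mp_vec d R u a t) (mp_vec d R u a t)) = tr_prod d (span_proj d R u) X"
    if a: "a < R" for a
  proof -
    have "(\<Sum>t<d. sesq d X (mp_vec d R u a t) (mp_vec d R u a t))
        = (\<Sum>t<R. sesq d X (\<lambda>i. u t i) (\<lambda>i. u t i))"
      using R a by (intro sum.mono_neutral_cong_right) (auto simp: mp_vec_def sesq_def)
    then show ?thesis unfolding sum_sesq_eq_tr_prod_gram_mat span_proj_def by simp
  qed
  have high: "(\<Sum>t<d. sesq d X (mp_vec d R u a t) (mp_vec d R u a t)) = tr_prod d (compl_mat d (span_proj d R u)) X"
    if a: "\<not> a < R" for a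
    using a unfolding mp_vec_def sum_sesq_eq_tr_prod_gram_mat
    by (subst compl_span_proj_eq_gram_mat[OF o]) simp
  show ?thesis
    using ab low high unfolding measure_prepare_def by (simp add: diag_kraus_map_index mp_weight_def)
qed

lemma measure_prepare_trace:
  assumes o: "orthonormal d R u" and R: "1 \<le> R" "R \<le> d" and X: "X \<in> carrier_mat d d"
  shows "mtrace (measure_prepare d R u X) = mtrace X"
proof -
  let ?P = "span_proj d R u" let ?Y = "measure_prepare d R u X"
  have "mtrace ?Y = (\<Sum>a\<in>{0..<R}. ?Y $$ (a,a)) + (\<Sum>a\<in>{R..<d}. ?Y $$ (a,a))"
    using R by (simp add: mtrace_def lessThan_atLeast0 sum.atLeastLessThan_concat)
  also have "(\<Sum>a\<in>{0..<R}. ?Y $$ (a,a)) = tr_prod d ?P X"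
    using R by (simp add: measure_prepare_index[OF o R(2)])
  also have "(\<Sum>a\<in>{R..<d}. ?Y $$ (a,a)) = tr_prod d (compl_mat d ?P) X"
  proof (cases "R = d")
    case True
    then show ?thesis using compl_span_proj_full[of d u] o by (simp add: tr_prod_def)
  next
    case False
    then show ?thesis using R by (simp add: measure_prepare_index[OF o R(2)] of_nat_diff)
  qed
  finally show ?thesis using tr_prod_add_compl[OF X span_proj_carrier] by simp
qed

lemma measure_prepare_one:
  assumes o: "orthonormal d R u" and R: "1 \<le> R" "R \<le> d"
  shows "measure_prepare d R u (1\<^sub>m d) = 1\<^sub>m d"
proof (rule eq_matI)
  fix a b assume "a < dim_row (1\<^sub>m d)" "b < dim_col (1\<^sub>m d)"
  then have ab: "a < d" "b < d" by auto
  have "tr_prod d (span_proj d R u) (1\<^sub>m d) = of_nat R"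
    unfolding tr_prod_one using span_proj_trace[OF o] .
  moreover have "tr_prod d (compl_mat d (span_proj d R u)) (1\<^sub>m d) = of_nat d - of_nat R"
    unfolding tr_prod_one using span_proj_trace[OF o] by (simp add: compl_mat_index sum_subtractf)
  ultimately show "measure_prepare d R u (1\<^sub>m d) $$ (a,b) = 1\<^sub>m d $$ (a,b)"
    using ab R by (simp add: measure_prepare_index[OF o R(2)] of_nat_diff field_simps)
qed auto

lemma unital_cptp_measure_prepare:
  assumes o: "orthonormal d R u" and R: "1 \<le> R" "R \<le> d"
  shows "unital_cptp d (measure_prepare d R u)"
  unfolding unital_cptp_def trace_preserving_def
  using linear_on_diag_kraus_map completely_positive_diag_kraus_map[of "mp_weight d R"]
    measure_prepare_trace[OF o R] measure_prepare_one[OF o R]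
  by (auto simp: measure_prepare_def mp_weight_def)

lemma measure_prepare_eq_Pi:
  assumes o: "orthonormal d R u" and R: "1 \<le> R" "R \<le> d"
    and \<rho>: "\<rho> \<in> carrier_mat d d" "mtrace \<rho> = 1" and P\<rho>: "span_proj d R u * \<rho> = \<rho>"
  shows "measure_prepare d R u \<rho> = (1 / of_nat R) \<cdot>\<^sub>m Pi_proj d R"
proof -
  let ?P = "span_proj d R u"
  have "tr_prod d ?P \<rho> = (\<Sum>j<d. (?P * \<rho>) $$ (j,j))"
    unfolding tr_prod_def using times_mat_index[OF span_proj_carrier \<rho>(1)]
    by (subst sum.swap) (simp add: mult.commute)
  then have "tr_prod d ?P \<rho> = 1" using P\<rho> \<rho> mtrace_eq_sum[OF \<rho>(1)] by simp
  moreover then have "tr_prod d (compl_mat d ?P) \<rho> = 0"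
    using tr_prod_add_compl[OF \<rho>(1) span_proj_carrier, of R u] \<rho>(2) by simp
  ultimately show ?thesis
    by (intro eq_matI) (auto simp: measure_prepare_index[OF o R(2)] Pi_proj_def)
qed

section \<open>Convex combinations of states\<close>

definition conv_comb :: "nat \<Rightarrow> nat \<Rightarrow> (nat \<Rightarrow> real) \<Rightarrow> (nat \<Rightarrow> complex mat) \<Rightarrow> complex mat" where
  "conv_comb d m p r = mat d d (\<lambda>(i, j). \<Sum>l<m. complex_of_real (p l) * (r l) $$ (i, j))"

lemma mem_conv_hull_mat_iff:
  "\<sigma> \<in> conv_hull_mat d V \<longleftrightarrow>
    (\<exists>m p r. m > 0 \<and> (\<forall>l<m. p l \<ge> 0 \<and> r l \<in> V) \<and> (\<Sum>l<m. p l) = 1 \<and> \<sigma> = conv_comb d m p r)"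
  unfolding conv_hull_mat_def conv_comb_def by blast

lemma conv_comb_carrier[simp]: "conv_comb d m p r \<in> carrier_mat d d"
  unfolding conv_comb_def by simp

lemma density_ops_carrier: "\<rho> \<in> density_ops d \<Longrightarrow> \<rho> \<in> carrier_mat d d"
  unfolding density_ops_def psd_def by simp

lemma sesq_conv_comb: "sesq d (conv_comb d m p r) f f = (\<Sum>l<m. complex_of_real (p l) * sesq d (r l) f f)"
proof -
  have "sesq d (conv_comb d m p r) f f = (\<Sum>i<d. \<Sum>j<d. \<Sum>l<m. complex_of_real (p l) * (cnj (f i) * r l $$ (i,j) * f j))"
    unfolding sesq_def conv_comb_def
    by (intro sum.cong refl) (simp add: sum_distrib_left sum_distrib_right algebra_simps)
  also have "\<dots> = (\<Sum>l<m. \<Sum>i<d. \<Sum>j<d. complex_of_real (p l) * (cnj (f i) * r l $$ (i,j) * f j))"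
    by (subst sum.swap, subst (2) sum.swap) (rule refl)
  also have "\<dots> = (\<Sum>l<m. complex_of_real (p l) * sesq d (r l) f f)"
    unfolding sesq_def by (simp add: sum_distrib_left)
  finally show ?thesis .
qed

lemma conv_hull_mat_subset_density_ops:
  assumes V: "V \<subseteq> density_ops d"
  shows "conv_hull_mat d V \<subseteq> density_ops d"
proof
  fix \<sigma> assume "\<sigma> \<in> conv_hull_mat d V"
  then obtain m p r where mpr: "\<forall>l<m. p l \<ge> 0 \<and> r l \<in> V" "(\<Sum>l<m. p l) = 1" "\<sigma> = conv_comb d m p r"
    unfolding mem_conv_hull_mat_iff by blast
  have rl: "psd d (r l)" "mtrace (r l) = 1" "r l \<in> carrier_mat d d" if "l < m" for l
    using mpr(1) V that density_ops_carrier unfolding density_ops_def by auto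
  have psd: "psd d (conv_comb d m p r)"
    unfolding psd_iff_sesq sesq_conv_comb Im_sum Re_sum
    using rl(1) mpr(1) unfolding psd_iff_sesq by (auto intro!: sum.neutral sum_nonneg)
  have "mtrace (conv_comb d m p r) = (\<Sum>i<d. \<Sum>l<m. complex_of_real (p l) * r l $$ (i,i))"
    unfolding mtrace_eq_sum[OF conv_comb_carrier] by (intro sum.cong refl) (simp add: conv_comb_def)
  also have "\<dots> = (\<Sum>l<m. complex_of_real (p l) * (\<Sum>i<d. r l $$ (i,i)))"
    by (subst sum.swap) (simp add: sum_distrib_left)
  also have "\<dots> = (\<Sum>l<m. complex_of_real (p l))"
  proof (rule sum.cong[OF refl])
    fix l assume "l \<in> {..<m}"
    then show "complex_of_real (p l) * (\<Sum>i<d. r l $$ (i,i)) = complex_of_real (p l)"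
      using rl(2,3)[of l] mtrace_eq_sum[of "r l" d] by simp
  qed
  also have "\<dots> = 1" using mpr(2) by (metis of_real_1 of_real_sum)
  finally have "mtrace (conv_comb d m p r) = 1" .
  then show "\<sigma> \<in> density_ops d" using psd mpr(3) unfolding density_ops_def by simp
qed

lemma subset_conv_hull_mat:
  assumes V: "V \<subseteq> density_ops d"
  shows "V \<subseteq> conv_hull_mat d V"
proof
  fix \<rho> assume r: "\<rho> \<in> V"
  then have "\<rho> = conv_comb d 1 (\<lambda>l. 1) (\<lambda>l. \<rho>)"
    using V density_ops_carrier by (intro eq_matI) (auto simp: conv_comb_def)
  then show "\<rho> \<in> conv_hull_mat d V" unfolding mem_conv_hull_mat_iff using r
    by (intro exI[of _ 1] exI[of _ "\<lambda>l. 1"] exI[of _ "\<lambda>l. \<rho>"]) auto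
qed

lemma conv_hull_mat_midpoint:
  assumes s: "\<sigma> \<in> conv_hull_mat d V" and r: "\<rho> \<in> V" and V: "V \<subseteq> density_ops d"
  shows "complex_of_real (1/2) \<cdot>\<^sub>m \<sigma> + complex_of_real (1/2) \<cdot>\<^sub>m \<rho> \<in> conv_hull_mat d V"
proof -
  obtain m p r where mpr: "\<forall>l<m. p l \<ge> 0 \<and> r l \<in> V" "(\<Sum>l<m. p l) = 1" "\<sigma> = conv_comb d m p r"
    using s unfolding mem_conv_hull_mat_iff by blast
  have rhoC: "\<rho> \<in> carrier_mat d d" using r V density_ops_carrier by auto
  define p' where "p' l = (if l < m then p l / 2 else 1/2)" for l
  define r' where "r' l = (if l < m then r l else \<rho>)" for l
  have "complex_of_real (1/2) \<cdot>\<^sub>m \<sigma> + complex_of_real (1/2) \<cdot>\<^sub>m \<rho> = conv_comb d (Suc m) p' r'"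
  proof (rule eq_matI)
    fix i j assume "i < dim_row (conv_comb d (Suc m) p' r')" "j < dim_col (conv_comb d (Suc m) p' r')"
    then have ij: "i < d" "j < d" unfolding conv_comb_def by auto
    have "(\<Sum>l<m. complex_of_real (p' l) * r' l $$ (i,j))
        = (\<Sum>l<m. complex_of_real (1/2) * (complex_of_real (p l) * r l $$ (i,j)))"
      by (intro sum.cong refl) (simp add: p'_def r'_def)
    then show "(complex_of_real (1/2) \<cdot>\<^sub>m \<sigma> + complex_of_real (1/2) \<cdot>\<^sub>m \<rho>) $$ (i,j) = conv_comb d (Suc m) p' r' $$ (i,j)"
      using ij rhoC mpr(3) by (simp add: conv_comb_def p'_def r'_def sum_distrib_left)
  qed (use rhoC mpr(3) in \<open>auto simp: conv_comb_def\<close>)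
  moreover have "(\<Sum>l<Suc m. p' l) = 1"
    using mpr(2) by (simp add: p'_def sum_divide_distrib[symmetric])
  moreover have "\<forall>l<Suc m. p' l \<ge> 0 \<and> r' l \<in> V" using mpr(1) r by (auto simp: p'_def r'_def)
  ultimately show ?thesis unfolding mem_conv_hull_mat_iff by blast
qed

lemma unital_cptp_const_on_conv_hull:
  assumes E: "unital_cptp d E" and C: "C \<in> carrier_mat d d" and EV: "\<forall>\<rho>\<in>V. E \<rho> = C"
    and V: "V \<subseteq> density_ops d" and s: "\<sigma> \<in> conv_hull_mat d V"
  shows "E \<sigma> = C"
proof -
  obtain m p r where mpr: "\<forall>l<m. p l \<ge> 0 \<and> r l \<in> V" "(\<Sum>l<m. p l) = 1" "\<sigma> = conv_comb d m p r"
    using s unfolding mem_conv_hull_mat_iff by blast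
  have rC: "r l \<in> carrier_mat d d" if "l < m" for l using mpr(1) V that density_ops_carrier by auto
  have "n \<le> m \<Longrightarrow> E (conv_comb d n p r) = (\<Sum>l<n. complex_of_real (p l)) \<cdot>\<^sub>m C" for n
  proof (induction n)
    case 0
    have "conv_comb d 0 p r = 0\<^sub>m d d" unfolding conv_comb_def by (intro eq_matI) auto
    then show ?case using unital_cptp_zero[OF E] C by (auto intro!: eq_matI)
  next
    case (Suc n)
    then have n: "n < m" by simp
    have "conv_comb d (Suc n) p r = 1 \<cdot>\<^sub>m conv_comb d n p r + complex_of_real (p n) \<cdot>\<^sub>m r n"
      using rC[OF n] by (intro eq_matI) (auto simp: conv_comb_def)
    then have "E (conv_comb d (Suc n) p r) = 1 \<cdot>\<^sub>m E (conv_comb d n p r) + complex_of_real (p n) \<cdot>\<^sub>m E (r n)"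
      using unital_cptp_lin[OF E conv_comb_carrier rC[OF n]] by simp
    also have "\<dots> = 1 \<cdot>\<^sub>m ((\<Sum>l<n. complex_of_real (p l)) \<cdot>\<^sub>m C) + complex_of_real (p n) \<cdot>\<^sub>m C"
      using Suc n EV mpr(1) by simp
    also have "\<dots> = (\<Sum>l<Suc n. complex_of_real (p l)) \<cdot>\<^sub>m C"
      using C by (intro eq_matI) (auto simp: algebra_simps)
    finally show ?case .
  qed
  from this[of m] have "E \<sigma> = (\<Sum>l<m. complex_of_real (p l)) \<cdot>\<^sub>m C" using mpr(3) by simp
  also have "(\<Sum>l<m. complex_of_real (p l)) = 1" using mpr(2) by (metis of_real_1 of_real_sum)
  finally show ?thesis using C by (auto intro!: eq_matI)
qed

section \<open>States of \<open>V\<close> live in the range of a state of maximal rank\<close>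

lemma range_basis_proj_fixed:
  assumes rb: "range_basis d A u w" and A: "A \<in> carrier_mat d d"
    and M: "M \<in> carrier_mat d d" and MA: "M * A = A"
  shows "M * span_proj d (vec_space.rank d A) u = span_proj d (vec_space.rank d A) u"
proof (rule eq_matI)
  let ?R = "vec_space.rank d A" let ?P = "span_proj d ?R u"
  have uw: "\<forall>i<?R. \<forall>a<d. u i a = (\<Sum>b<d. A $$ (a,b) * w i b)" using rb unfolding range_basis_def by blast
  have Mu: "(\<Sum>c<d. M $$ (a,c) * u i c) = u i a" if i: "i < ?R" and a: "a < d" for i a
  proof -
    have "(\<Sum>c<d. M $$ (a,c) * u i c) = (\<Sum>e<d. \<Sum>c<d. M $$ (a,c) * A $$ (c,e) * w i e)"
      using uw i by (subst sum.swap) (simp add: sum_distrib_left mult.assoc)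
    also have "\<dots> = (\<Sum>e<d. (M * A) $$ (a,e) * w i e)"
      using times_mat_index[OF M A a] by (simp add: sum_distrib_right)
    finally show ?thesis using MA uw i a by simp
  qed
  fix a b assume "a < dim_row ?P" "b < dim_col ?P"
  then have ab: "a < d" "b < d" by auto
  have "(M * ?P) $$ (a,b) = (\<Sum>i<?R. (\<Sum>c<d. M $$ (a,c) * u i c) * cnj (u i b))"
    unfolding times_mat_index[OF M span_proj_carrier ab] using ab
    by (simp add: span_proj_index sum_distrib_left sum_distrib_right mult.assoc sum.swap[of _ "{..<d}"])
  also have "\<dots> = ?P $$ (a,b)" using Mu ab by (simp add: span_proj_index)
  finally show "(M * ?P) $$ (a,b) = ?P $$ (a,b)" .
qed (use M in auto)

lemma sesq_compl_span_proj_col: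
  assumes o: "orthonormal d R u" and o': "orthonormal d R' u'"
    and P'P: "span_proj d R' u' * span_proj d R u = span_proj d R u" and j: "j < d"
  shows "sesq d (compl_mat d (span_proj d R u)) (\<lambda>i. span_proj d R' u' $$ (i,j)) (\<lambda>i. span_proj d R' u' $$ (i,j))
    = span_proj d R' u' $$ (j,j) - span_proj d R u $$ (j,j)"
proof -
  let ?P = "span_proj d R u" let ?P' = "span_proj d R' u'" let ?g = "\<lambda>i. ?P' $$ (i,j)"
  have PP': "?P * ?P' = ?P"
    by (rule hermitian_mat_mult_comm[OF hermitian_span_proj hermitian_span_proj hermitian_span_proj P'P])
  have "sesq d (1\<^sub>m d) ?g ?g = (\<Sum>a<d. ?P' $$ (j,a) * ?P' $$ (a,j))"
    unfolding sesq_one using hermitian_matD[OF hermitian_span_proj _ j] by simp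
  also have "\<dots> = ?P' $$ (j,j)" using span_proj_idem[OF o' j j] .
  finally have T1: "sesq d (1\<^sub>m d) ?g ?g = ?P' $$ (j,j)" .
  have "sesq d ?P ?g ?g = (\<Sum>a<d. ?P' $$ (j,a) * ?P $$ (a,j))"
    unfolding sesq_col[OF span_proj_carrier span_proj_carrier j] PP'
    using hermitian_matD[OF hermitian_span_proj _ j] by simp
  also have "\<dots> = (?P' * ?P) $$ (j,j)" using times_mat_index[OF span_proj_carrier span_proj_carrier j j] by simp
  finally have T2: "sesq d ?P ?g ?g = ?P $$ (j,j)" unfolding P'P .
  show ?thesis unfolding compl_mat_def sesq_lin[OF one_carrier_mat span_proj_carrier] T1 T2 by simp
qed

text \<open>The positive matrix \<open>P' (1 - P) P'\<close> has trace \<open>rank P' - rank P \<le> 0\<close>, so \<open>(1 - P) P' = 0\<close>.\<close>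

lemma span_proj_absorb_of_rank_le:
  assumes o: "orthonormal d R u" and o': "orthonormal d R' u'"
    and P'P: "span_proj d R' u' * span_proj d R u = span_proj d R u" and R'R: "R' \<le> R"
  shows "span_proj d R u * span_proj d R' u' = span_proj d R' u'"
proof -
  let ?P = "span_proj d R u" let ?P' = "span_proj d R' u'" let ?Q = "compl_mat d ?P"
  define g where "g j = (\<lambda>i. ?P' $$ (i,j))" for j
  have "(\<Sum>j<d. sesq d ?Q (g j) (g j)) = of_nat R' - of_nat R"
    using sesq_compl_span_proj_col[OF o o' P'P] span_proj_trace[OF o'] span_proj_trace[OF o]
    unfolding g_def by (simp add: sum_subtractf)
  then have "(\<Sum>j<d. Re (sesq d ?Q (g j) (g j))) \<le> 0"
    using R'R by (metis Re_complex_of_real Re_sum minus_complex.sel(1) of_real_of_nat_eq of_nat_le_iff diff_le_0_iff_le)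
  moreover have nn: "Re (sesq d ?Q (g j) (g j)) \<ge> 0" for j
    using psd_compl_span_proj[OF o] unfolding psd_iff_sesq by blast
  ultimately have "(\<Sum>j<d. Re (sesq d ?Q (g j) (g j))) = 0" by (meson antisym sum_nonneg)
  then have z: "Re (sesq d ?Q (g j) (g j)) = 0" if "j < d" for j
    using nn that by (subst (asm) sum_nonneg_eq_0_iff) auto
  have "?Q * ?P' = 0\<^sub>m d d"
  proof (rule eq_matI)
    fix a j assume "a < dim_row (0\<^sub>m d d :: complex mat)" "j < dim_col (0\<^sub>m d d :: complex mat)"
    then have aj: "a < d" "j < d" by auto
    show "(?Q * ?P') $$ (a,j) = 0\<^sub>m d d $$ (a,j)"
      unfolding times_mat_index[OF compl_mat_carrier[OF span_proj_carrier] span_proj_carrier aj]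
      using psd_sesq_zero_imp_mult_zero[OF psd_compl_span_proj[OF o] z[OF aj(2)] aj(1)] aj
      by (simp add: g_def)
  qed auto
  then show ?thesis using compl_mat_mult_eq_zero_iff[OF span_proj_carrier span_proj_carrier] by blast
qed

text \<open>The range \<open>P'\<close> of \<open>\<sigma> = (\<rho>\<^sub>0 + \<rho>)/2\<close> contains those of \<open>\<rho>\<^sub>0\<close> and \<open>\<rho>\<close>, since \<open>(1 - P') \<sigma> = 0\<close> forces
  \<open>(1 - P') \<rho>\<^sub>0 = (1 - P') \<rho> = 0\<close>. If \<open>rank \<sigma> \<le> rank \<rho>\<^sub>0\<close>, it equals the range of \<open>\<rho>\<^sub>0\<close>.\<close>

lemma range_basis_proj_fixes_of_midpoint_rank_le:
  assumes p0: "psd d \<rho>0" and p: "psd d \<rho>" and rb: "range_basis d \<rho>0 u w"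
    and Rle: "vec_space.rank d (complex_of_real (1/2) \<cdot>\<^sub>m \<rho>0 + complex_of_real (1/2) \<cdot>\<^sub>m \<rho>) \<le> vec_space.rank d \<rho>0"
  shows "span_proj d (vec_space.rank d \<rho>0) u * \<rho> = \<rho>"
proof -
  define \<sigma> where "\<sigma> = complex_of_real (1/2) \<cdot>\<^sub>m \<rho>0 + complex_of_real (1/2) \<cdot>\<^sub>m \<rho>"
  have r0C: "\<rho>0 \<in> carrier_mat d d" and rC: "\<rho> \<in> carrier_mat d d" using p0 p unfolding psd_def by auto
  have ps: "psd d \<sigma>" unfolding \<sigma>_def by (rule psd_nonneg_comb[OF p0 p]) auto
  have sC: "\<sigma> \<in> carrier_mat d d" using ps unfolding psd_def by simp
  obtain u' w' where rb': "range_basis d \<sigma> u' w'" using range_basis_exists[OF sC] by blast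
  let ?R = "vec_space.rank d \<rho>0" let ?R' = "vec_space.rank d \<sigma>"
  let ?P = "span_proj d ?R u" let ?P' = "span_proj d ?R' u'" let ?Q' = "compl_mat d ?P'"
  have o: "orthonormal d ?R u" and o': "orthonormal d ?R' u'" and P's: "?P' * \<sigma> = \<sigma>"
    using rb rb' unfolding range_basis_def by blast+
  have hQ': "hermitian_mat d ?Q'" by (rule hermitian_mat_compl_mat[OF hermitian_span_proj])
  have "?Q' * \<sigma> = 0\<^sub>m d d" using compl_mat_mult_eq_zero_iff[OF span_proj_carrier sC] P's by simp
  then have "\<sigma> * ?Q' = 0\<^sub>m d d"
    by (rule hermitian_mat_mult_comm[OF hQ' psd_hermitian_mat[OF ps] hermitian_mat_zero])
  then have "\<rho>0 * ?Q' = 0\<^sub>m d d" "\<rho> * ?Q' = 0\<^sub>m d d"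
    using psd_comb_mult_zero[OF p0 p _ _ compl_mat_carrier[OF span_proj_carrier], of "1/2" "1/2"]
      psd_comb_mult_zero[OF p p0 _ _ compl_mat_carrier[OF span_proj_carrier], of "1/2" "1/2"]
      comm_add_mat[of "complex_of_real (1/2) \<cdot>\<^sub>m \<rho>0" d d "complex_of_real (1/2) \<cdot>\<^sub>m \<rho>"] r0C rC
    unfolding \<sigma>_def by auto
  then have "?Q' * \<rho>0 = 0\<^sub>m d d" "?Q' * \<rho> = 0\<^sub>m d d"
    using hermitian_mat_mult_comm[OF psd_hermitian_mat[OF p0] hQ' hermitian_mat_zero]
      hermitian_mat_mult_comm[OF psd_hermitian_mat[OF p] hQ' hermitian_mat_zero] by auto
  then have P'r0: "?P' * \<rho>0 = \<rho>0" and P'r: "?P' * \<rho> = \<rho>"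
    using compl_mat_mult_eq_zero_iff[OF span_proj_carrier] r0C rC by auto
  have PP': "?P * ?P' = ?P'"
    using span_proj_absorb_of_rank_le[OF o o' range_basis_proj_fixed[OF rb r0C span_proj_carrier P'r0]]
      Rle unfolding \<sigma>_def by blast
  have "?P * \<rho> = ?P * (?P' * \<rho>)" using P'r by simp
  also have "\<dots> = (?P * ?P') * \<rho>" using assoc_mult_mat[OF span_proj_carrier span_proj_carrier rC] by simp
  also have "\<dots> = \<rho>" using PP' P'r by simp
  finally show ?thesis .
qed

section \<open>The yield\<close>

lemma density_ops_rank_bounds:
  assumes "\<rho> \<in> density_ops d"
  shows "1 \<le> vec_space.rank d \<rho>" "vec_space.rank d \<rho> \<le> d"
proof -
  have C: "\<rho> \<in> carrier_mat d d" using assms by (rule density_ops_carrier)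
  show "1 \<le> vec_space.rank d \<rho>"
    using mtrace_eq_1_imp_rank_pos[OF C] assms unfolding density_ops_def by blast
  show "vec_space.rank d \<rho> \<le> d" by (rule vec_space.rank_le_nc[OF C])
qed

lemma conv_hull_mat_max_rank:
  assumes V: "V \<in> specs d"
  obtains \<rho>0 where "\<rho>0 \<in> conv_hull_mat d V"
    and "\<And>\<sigma>. \<sigma> \<in> conv_hull_mat d V \<Longrightarrow> vec_space.rank d \<sigma> \<le> vec_space.rank d \<rho>0"
proof -
  let ?H = "conv_hull_mat d V"
  have dens: "V \<subseteq> density_ops d" "?H \<subseteq> density_ops d"
    using V conv_hull_mat_subset_density_ops unfolding specs_def by auto
  have "vec_space.rank d ` ?H \<subseteq> {..d}"
    using dens(2) density_ops_rank_bounds(2) by (auto simp: image_subset_iff)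
  then have "finite (vec_space.rank d ` ?H)" by (rule finite_subset) simp
  moreover have "?H \<noteq> {}" using V subset_conv_hull_mat[OF dens(1)] unfolding specs_def by blast
  ultimately obtain \<rho>0 where "\<rho>0 \<in> ?H" "vec_space.rank d \<rho>0 = Max (vec_space.rank d ` ?H)"
    using Max_in by (metis (no_types, lifting) empty_is_image imageE)
  then show ?thesis using that \<open>finite (vec_space.rank d ` ?H)\<close> by simp
qed

lemma convertible_to_Pi_max_rank:
  assumes V: "V \<subseteq> density_ops d" and \<rho>0: "\<rho>0 \<in> conv_hull_mat d V"
    and max: "\<And>\<sigma>. \<sigma> \<in> conv_hull_mat d V \<Longrightarrow> vec_space.rank d \<sigma> \<le> vec_space.rank d \<rho>0"
  shows "convertible d V (currency_set d (Some (vec_space.rank d \<rho>0)))"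
proof -
  let ?R = "vec_space.rank d \<rho>0"
  have "\<rho>0 \<in> density_ops d" using \<rho>0 conv_hull_mat_subset_density_ops[OF V] by blast
  then have p0: "psd d \<rho>0" and r0C: "\<rho>0 \<in> carrier_mat d d" and R: "1 \<le> ?R" "?R \<le> d"
    using density_ops_rank_bounds density_ops_carrier unfolding density_ops_def by blast+
  obtain u w where rb: "range_basis d \<rho>0 u w" using range_basis_exists[OF r0C] by blast
  then have o: "orthonormal d ?R u" unfolding range_basis_def by blast
  have "measure_prepare d ?R u \<rho> = (1 / of_nat ?R) \<cdot>\<^sub>m Pi_proj d ?R" if r: "\<rho> \<in> V" for \<rho>
  proof -
    have \<rho>: "psd d \<rho>" "\<rho> \<in> carrier_mat d d" "mtrace \<rho> = 1"
      using r V density_ops_carrier unfolding density_ops_def by auto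
    have "span_proj d ?R u * \<rho> = \<rho>"
      using range_basis_proj_fixes_of_midpoint_rank_le[OF p0 \<rho>(1) rb]
        max[OF conv_hull_mat_midpoint[OF \<rho>0 r V]] by blast
    then show ?thesis using measure_prepare_eq_Pi[OF o R \<rho>(2,3)] by blast
  qed
  then show ?thesis
    unfolding convertible_def currency_set_def using unital_cptp_measure_prepare[OF o R] by auto
qed

lemma rank_le_if_convertible_to_Pi:
  assumes V: "V \<subseteq> density_ops d" and \<rho>0: "\<rho>0 \<in> conv_hull_mat d V" and k: "k \<le> d"
    and conv: "convertible d V (currency_set d (Some k))"
  shows "vec_space.rank d \<rho>0 \<le> k"
proof -
  obtain E where E: "unital_cptp d E" and EV: "\<forall>\<rho>\<in>V. E \<rho> = (1 / of_nat k) \<cdot>\<^sub>m Pi_proj d k"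
    using conv unfolding convertible_def currency_set_def by auto
  have "E \<rho>0 = (1 / of_nat k) \<cdot>\<^sub>m Pi_proj d k"
    by (rule unital_cptp_const_on_conv_hull[OF E _ EV V \<rho>0]) (simp add: Pi_proj_def)
  moreover have "psd d \<rho>0"
    using \<rho>0 conv_hull_mat_subset_density_ops[OF V] unfolding density_ops_def by blast
  ultimately show ?thesis using rank_le_if_unital_cptp_to_Pi[OF E _ k] by blast
qed

lemma yield_eq_max_rank:
  assumes V: "V \<subseteq> density_ops d" and \<rho>0: "\<rho>0 \<in> conv_hull_mat d V"
    and max: "\<And>\<sigma>. \<sigma> \<in> conv_hull_mat d V \<Longrightarrow> vec_space.rank d \<sigma> \<le> vec_space.rank d \<rho>0"
  shows "yield d V = log 2 (real d) - log 2 (real (vec_space.rank d \<rho>0))"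
proof -
  let ?R = "vec_space.rank d \<rho>0"
  have "\<rho>0 \<in> density_ops d" using \<rho>0 conv_hull_mat_subset_density_ops[OF V] by blast
  then have R: "1 \<le> ?R" "?R \<le> d" using density_ops_rank_bounds by blast+
  have "currency_val d c \<le> log 2 (real d) - log 2 (real ?R)"
    if "c \<in> currency_index d" "convertible d V (currency_set d c)" for c
  proof (cases c)
    case None
    then show ?thesis using R by (simp add: currency_val_def)
  next
    case (Some k)
    then have "k \<le> d" using that(1) unfolding currency_index_def by auto
    then have "?R \<le> k" using rank_le_if_convertible_to_Pi[OF V \<rho>0] that(2) Some by blast
    then show ?thesis using R Some by (simp add: currency_val_def)
  qed
  moreover have "log 2 (real d) - log 2 (real ?R) \<in>
      {currency_val d c | c. c \<in> currency_index d \<and> convertible d V (currency_set d c)}"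
    using convertible_to_Pi_max_rank[OF V \<rho>0 max] R
    by (intro CollectI exI[of _ "Some ?R"]) (simp add: currency_val_def currency_index_def)
  ultimately show ?thesis unfolding yield_def by (intro cSup_eq_maximum) blast+
qed

lemma Max_H0_conv_hull_mat:
  assumes V: "V \<subseteq> density_ops d" and \<rho>0: "\<rho>0 \<in> conv_hull_mat d V"
    and max: "\<And>\<sigma>. \<sigma> \<in> conv_hull_mat d V \<Longrightarrow> vec_space.rank d \<sigma> \<le> vec_space.rank d \<rho>0"
  shows "Max (H0 d ` conv_hull_mat d V) = log 2 (real (vec_space.rank d \<rho>0))"
proof (rule Max_eqI)
  let ?H = "conv_hull_mat d V"
  have dens: "\<sigma> \<in> density_ops d" if "\<sigma> \<in> ?H" for \<sigma>
    using that conv_hull_mat_subset_density_ops[OF V] by blast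
  have "H0 d ` ?H \<subseteq> (\<lambda>k. log 2 (real k)) ` {..d}"
    using density_ops_rank_bounds(2)[OF dens] unfolding H0_def by auto
  then show "finite (H0 d ` ?H)" using finite_surj by blast
  show "log 2 (real (vec_space.rank d \<rho>0)) \<in> H0 d ` ?H" using \<rho>0 unfolding H0_def by blast
  fix y assume "y \<in> H0 d ` ?H"
  then obtain \<sigma> where \<sigma>: "\<sigma> \<in> ?H" "y = log 2 (real (vec_space.rank d \<sigma>))" unfolding H0_def by blast
  have "vec_space.rank d \<sigma> \<ge> 1" by (rule density_ops_rank_bounds(1)[OF dens[OF \<sigma>(1)]])
  then show "y \<le> log 2 (real (vec_space.rank d \<rho>0))" using \<sigma> max[OF \<sigma>(1)] by simp
qed

theorem mainTheorem13:
  fixes d :: nat and V :: "complex mat set"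
  assumes "d \<ge> 1"
    and "V \<in> specs d"
  shows "yield d V = log 2 (real d) - Max (H0 d ` conv_hull_mat d V)"
proof -
  have V: "V \<subseteq> density_ops d" using assms(2) unfolding specs_def by blast
  obtain \<rho>0 where \<rho>0: "\<rho>0 \<in> conv_hull_mat d V"
    and max: "\<And>\<sigma>. \<sigma> \<in> conv_hull_mat d V \<Longrightarrow> vec_space.rank d \<sigma> \<le> vec_space.rank d \<rho>0"
    using conv_hull_mat_max_rank[OF assms(2)] by blast
  show ?thesis using yield_eq_max_rank[OF V \<rho>0 max] Max_H0_conv_hull_mat[OF V \<rho>0 max] by simp
qed

end
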